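(* Let $\mu$ be a finite Borel measure on $(-\pi,\pi)$ and $\mu^\#$ its symmetrization. Then $u_\mu^\star(t)\le u_{\mu^\#}^\star(t)$ for all $t\in[0,2\pi]$.
   Context: A "Borel measure on $(-\pi,\pi)$" means a positive, non-zero measure on the Borel sets of $(-\pi,\pi)$; $\lambda$ is Lebesgue measure. $G(x,y)=-\frac{xy}{2\pi}-\frac12|x-y|+\frac{\pi}{2}$ on $[-\pi,\pi]^2$, $u_\mu(x)=\int G(x,y)\,d\mu(y)$. Write $\mu=\nu+\sigma+\delta$ (unique decomposition) with $d\nu=f\,d\lambda$, $0\le f\in L^1[-\pi,\pi]$, $\sigma\perp\lambda$ atomless, $\delta$ purely discontinuous. $f^\#(t)=f^*(2|t|)$ where $f^*(t)=\inf\{s:\lambda(\{f>s\})\le t\}$ for $t\in(0,2\pi)$ (with $f^*(0)=\operatorname{ess\,sup}f$, $f^*(2\pi)=\operatorname{ess\,inf}f$). Symmetrization: $d\mu^\#=f^\#\,d\lambda+M\,d\delta_0$ with $M=\sigma((-\pi,\pi))+\delta((-\pi,\pi))$. Star function: $g^\star(t)=\sup\{\int_E g\,d\lambda:E\subset[-\pi,\pi]\text{ Borel},\lambda(E)=t\}$, $t\in[0,2\pi]$. *)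

theory Defs
  imports "HOL-Analysis.Analysis" "HOL-Probability.Essential_Supremum"
begin

definition G :: "real \<Rightarrow> real \<Rightarrow> real" where
  "G x y = - (x * y) / (2 * pi) - \<bar>x - y\<bar> / 2 + pi / 2"

definition u_pot :: "real measure \<Rightarrow> real \<Rightarrow> real" where
  "u_pot \<mu> x = (\<integral>y. G x y \<partial>\<mu>)"

definition star_fun :: "(real \<Rightarrow> real) \<Rightarrow> real \<Rightarrow> real" where
  "star_fun g t = Sup {(LINT x:E|lborel. g x) | E. E \<in> sets borel \<and> E \<subseteq> {-pi..pi} \<and> measure lborel E = t}"

definition decr_rearr :: "(real \<Rightarrow> real) \<Rightarrow> real \<Rightarrow> real" where
  "decr_rearr f t =
     (if t = 0 then real_of_ereal (esssup (restrict_space lborel {-pi..pi}) (\<lambda>x. ereal (f x)))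
      else if t = 2 * pi then real_of_ereal (- esssup (restrict_space lborel {-pi..pi}) (\<lambda>x. - ereal (f x)))
      else Inf {s. measure lborel {x \<in> {-pi..pi}. f x > s} \<le> t})"

definition sym_rearr :: "(real \<Rightarrow> real) \<Rightarrow> real \<Rightarrow> real" where
  "sym_rearr f t = decr_rearr f (2 * \<bar>t\<bar>)"

text \<open>Symmetrization mu^# = f^# d lambda (on (-pi,pi)) + M delta_0, as a Borel measure on the real line.\<close>
definition sym_measure :: "(real \<Rightarrow> real) \<Rightarrow> real \<Rightarrow> real measure" where
  "sym_measure f M = measure_of UNIV (sets borel)
     (\<lambda>A. (\<integral>\<^sup>+x. ennreal (indicator {-pi<..<pi} x * sym_rearr f x) * indicator A x \<partial>lborel)
          + ennreal M * indicator A 0)"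

end

theory Submission
  imports Defs "HOL-Probability.Giry_Monad"
begin

(*
  For a Borel set E let H_E(y) = set_pot E y = int_E G(x,y) dx, so that int_E u_mu = int H_E dmu
  by Fubini. Each H_E is continuous and concave on [-pi,pi]; hence
  (bathtub principle) the integral of H_E over a set A does not decrease when A is replaced by a
  suitable interval of the same length. Doing this for A, then (by the symmetry of G) for E, and
  computing the double integral of G over two intervals explicitly, one gets
  int_A H_E <= int_A* H_E*, where A*, E* are the centred intervals of the same lengths; similarly
  H_E(y) <= H_E*(0). By the layer-cake formula the absolutely continuous part of mu is a
  superposition of the level sets {f > s}, whose centred intervals lie, up to null sets, in the
  level sets {f^# >= s}; the mass of the remaining parts is moved to 0. This gives int_E u_mu <= int_E* u_mu#,
  and taking suprema over E yields the inequality of the star functions.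
*)

section \<open>The Green function\<close>

lemma G_eq_le: "x \<le> y \<Longrightarrow> G x y = (pi + x) * (pi - y) / (2 * pi)"
  unfolding G_def by (simp add: field_simps abs_if)

lemma G_commute: "G x y = G y x"
  unfolding G_def by (simp add: abs_minus_commute mult.commute)

lemma G_nonneg: "x \<in> {-pi..pi} \<Longrightarrow> y \<in> {-pi..pi} \<Longrightarrow> 0 \<le> G x y"
  using G_eq_le[of x y] G_eq_le[of y x] by (cases "x \<le> y") (auto simp: G_commute)

lemma G_le:
  assumes "x \<in> {-pi..pi}" "y \<in> {-pi..pi}"
  shows "G x y \<le> pi / 2"
proof -
  have le: "G x y \<le> pi / 2" if "x \<le> y" "x \<in> {-pi..pi}" "y \<in> {-pi..pi}" for x y
  proof -
    have "(pi + x) * (pi - y) \<le> (pi + y) * (pi - y)"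
      using that by (intro mult_right_mono) auto
    also have "\<dots> \<le> pi * pi" by (simp add: algebra_simps)
    finally show ?thesis using that by (simp add: G_eq_le field_simps)
  qed
  show ?thesis
    using le[of x y] le[of y x] assms by (cases "x \<le> y") (auto simp: G_commute)
qed

lemma G_lipschitz: "\<bar>x\<bar> \<le> pi \<Longrightarrow> \<bar>G x y - G x y'\<bar> \<le> \<bar>y - y'\<bar>"
proof -
  assume x: "\<bar>x\<bar> \<le> pi"
  have "\<bar>x * (y - y')\<bar> \<le> pi * \<bar>y - y'\<bar>"
    using x by (simp add: abs_mult mult_right_mono)
  then have "\<bar>x * (y - y') / (2 * pi)\<bar> \<le> \<bar>y - y'\<bar> / 2"
    by (simp add: field_simps abs_divide)
  moreover have "\<bar>(\<bar>x - y\<bar> - \<bar>x - y'\<bar>) / 2\<bar> \<le> \<bar>y - y'\<bar> / 2" by simp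
  moreover have "G x y - G x y' = - (x * (y - y') / (2 * pi)) - (\<bar>x - y\<bar> - \<bar>x - y'\<bar>) / 2"
    unfolding G_def by (simp add: field_simps)
  ultimately show ?thesis by (simp only: abs_le_iff) (intro conjI; elim conjE; linarith)
qed

lemma concave_on_G: "convex S \<Longrightarrow> concave_on S (G x)"
proof -
  assume S: "convex S"
  have "G x = (\<lambda>y. (pi / 2 - x / (2 * pi) * y) - dist x y / 2)"
    by (auto simp: G_def dist_real_def fun_eq_iff)
  moreover have "concave_on S (\<lambda>y. pi / 2 - x / (2 * pi) * y)"
    unfolding concave_on_iff
  proof (intro conjI S ballI allI impI)
    fix a b u v :: real assume "u + v = 1"
    then have v: "v = 1 - u" by simp
    show "u * (pi / 2 - x / (2 * pi) * a) + v * (pi / 2 - x / (2 * pi) * b)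
        \<le> pi / 2 - x / (2 * pi) * (u *\<^sub>R a + v *\<^sub>R b)"
      unfolding v by (simp add: field_simps)
  qed
  moreover have "convex_on S (\<lambda>y. dist x y / 2)"
    using S by (auto intro: convex_on_cdiv)
  ultimately show ?thesis by (simp add: concave_on_diff)
qed

lemma continuous_on_G2: "continuous_on S (\<lambda>y. G x y)"
  unfolding G_def by (intro continuous_intros) auto

lemma continuous_on_G1: "continuous_on S (\<lambda>x. G x y)"
  unfolding G_def by (intro continuous_intros) auto

lemma G_measurable:
  assumes "sets M = sets borel" "sets N = sets borel"
  shows "(\<lambda>(x, y). G x y) \<in> borel_measurable (M \<Otimes>\<^sub>M N)"
proof -
  have "continuous_on UNIV (\<lambda>p. G (fst p) (snd p))"
    unfolding G_def by (intro continuous_intros) auto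
  then have "(\<lambda>(x, y). G x y) \<in> borel_measurable (borel :: (real \<times> real) measure)"
    unfolding case_prod_beta' by (rule borel_measurable_continuous_onI)
  moreover have "sets (M \<Otimes>\<^sub>M N) = sets (borel \<Otimes>\<^sub>M borel :: (real \<times> real) measure)"
    using assms by (intro sets_pair_measure_cong) auto
  ultimately show ?thesis
    unfolding borel_prod using measurable_cong_sets[OF _ refl] by blast
qed

section \<open>Potentials of intervals\<close>

lemma DERIV_mult_abs: "((\<lambda>z::real. z * \<bar>z\<bar>) has_real_derivative 2 * \<bar>z\<bar>) (at z)"
proof (cases z "0::real" rule: linorder_cases)
  case less
  have "((\<lambda>z. - (z * z)) has_real_derivative 2 * \<bar>z\<bar>) (at z)"
    using less by (auto intro!: derivative_eq_intros)
  then show ?thesis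
    by (rule has_field_derivative_transform_within_open[where S="{..<0}"]) (use less in auto)
next
  case equal
  have "((\<lambda>h::real. \<bar>h\<bar>) \<longlongrightarrow> \<bar>0\<bar>) (at 0)"
    by (intro tendsto_intros)
  moreover have "\<forall>\<^sub>F h in at (0::real). \<bar>h\<bar> = (h * \<bar>h\<bar> - 0 * \<bar>0\<bar>) / (h - 0)"
    by (auto simp: eventually_at_filter)
  ultimately show ?thesis
    using equal by (simp add: has_field_derivative_iff tendsto_cong)
next
  case greater
  have "((\<lambda>z. z * z) has_real_derivative 2 * \<bar>z\<bar>) (at z)"
    using greater by (auto intro!: derivative_eq_intros)
  then show ?thesis
    by (rule has_field_derivative_transform_within_open[where S="{0<..}"]) (use greater in auto)
qed

lemma DERIV_abs_cube: "((\<lambda>z::real. \<bar>z\<bar> ^ 3) has_real_derivative 3 * (z * \<bar>z\<bar>)) (at z)"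
proof -
  have "((\<lambda>z. z * (z * \<bar>z\<bar>)) has_real_derivative 1 * (z * \<bar>z\<bar>) + 2 * \<bar>z\<bar> * z) (at z)"
    by (rule DERIV_mult[OF DERIV_ident DERIV_mult_abs])
  moreover have "z * (z * \<bar>z\<bar>) = \<bar>z\<bar> ^ 3" for z :: real
    by (simp add: power3_eq_cube abs_mult_self_eq mult.assoc[symmetric])
  ultimately show ?thesis by (simp add: algebra_simps)
qed

definition set_pot :: "real set \<Rightarrow> real \<Rightarrow> real" where
  "set_pot E y = (LINT x:E|lborel. G x y)"

definition pot_Icc :: "real \<Rightarrow> real \<Rightarrow> real \<Rightarrow> real" where
  "pot_Icc a b y = pi * (b - a) / 2 - y * (b^2 - a^2) / (4 * pi)
     - ((b - y) * \<bar>b - y\<bar> - (a - y) * \<bar>a - y\<bar>) / 4"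

definition mutual_energy_Icc :: "real \<Rightarrow> real \<Rightarrow> real \<Rightarrow> real \<Rightarrow> real" where
  "mutual_energy_Icc j1 j2 k1 k2 = pi * (k2 - k1) * (j2 - j1) / 2 - (j2^2 - j1^2) * (k2^2 - k1^2) / (8 * pi)
     + (\<bar>k2 - j2\<bar>^3 - \<bar>k1 - j2\<bar>^3 - \<bar>k2 - j1\<bar>^3 + \<bar>k1 - j1\<bar>^3) / 12"

lemma set_pot_Icc:
  assumes "a \<le> b"
  shows "set_pot {a..b} y = pot_Icc a b y"
proof -
  define F where "F x = pi * x / 2 - x^2 * y / (4 * pi) - (x - y) * \<bar>x - y\<bar> / 4" for x
  have F': "(F has_real_derivative G x y) (at x)" for x
  proof -
    have d: "((\<lambda>x. (x - y) * \<bar>x - y\<bar>) has_real_derivative 2 * \<bar>x - y\<bar> * 1) (at x)"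
      by (rule DERIV_chain2[OF DERIV_mult_abs]) (auto intro!: derivative_eq_intros)
    have "(F has_real_derivative pi / 2 - 2 * x * y / (4 * pi) - 2 * \<bar>x - y\<bar> * 1 / 4) (at x)"
      unfolding F_def by (rule DERIV_diff[OF _ DERIV_cdivide[OF d]]) (auto intro!: derivative_eq_intros)
    moreover have "pi / 2 - 2 * x * y / (4 * pi) - 2 * \<bar>x - y\<bar> * 1 / 4 = G x y"
      by (simp add: G_def field_simps)
    ultimately show ?thesis by simp
  qed
  have "(LBINT x. indicator {a..b} x *\<^sub>R G x y) = F b - F a"
    by (intro integral_FTC_atLeastAtMost[OF assms])
       (auto simp: has_real_derivative_iff_has_vector_derivative[symmetric]
             intro!: DERIV_subset[OF F'] continuous_on_G1)
  also have "F b - F a = pot_Icc a b y"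
    unfolding F_def pot_Icc_def by (simp add: field_simps power2_eq_square)
  finally show ?thesis unfolding set_pot_def set_lebesgue_integral_def .
qed

lemma set_integral_pot_Icc:
  assumes "j1 \<le> j2"
  shows "(LINT y:{j1..j2}|lborel. pot_Icc k1 k2 y) = mutual_energy_Icc j1 j2 k1 k2"
proof -
  define P where "P y = pi * (k2 - k1) * y / 2 - y^2 * (k2^2 - k1^2) / (8 * pi)
    + (\<bar>k2 - y\<bar>^3 - \<bar>k1 - y\<bar>^3) / 12" for y
  have cube: "((\<lambda>y. \<bar>k - y\<bar>^3) has_real_derivative 3 * ((k - y) * \<bar>k - y\<bar>) * (-1)) (at y)" for k y
    by (rule DERIV_chain2[OF DERIV_abs_cube]) (auto intro!: derivative_eq_intros)
  have P': "(P has_real_derivative pot_Icc k1 k2 y) (at y)" for y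
  proof -
    have "(P has_real_derivative pi * (k2 - k1) / 2 - 2 * y * (k2^2 - k1^2) / (8 * pi)
        + (3 * ((k2 - y) * \<bar>k2 - y\<bar>) * (-1) - 3 * ((k1 - y) * \<bar>k1 - y\<bar>) * (-1)) / 12) (at y)"
      unfolding P_def
      by (rule DERIV_add[OF _ DERIV_cdivide[OF DERIV_diff[OF cube cube]]]) (auto intro!: derivative_eq_intros)
    moreover have "pi * (k2 - k1) / 2 - 2 * y * (k2^2 - k1^2) / (8 * pi)
        + (3 * ((k2 - y) * \<bar>k2 - y\<bar>) * (-1) - 3 * ((k1 - y) * \<bar>k1 - y\<bar>) * (-1)) / 12
        = pot_Icc k1 k2 y"
      by (simp add: pot_Icc_def field_simps)
    ultimately show ?thesis by simp
  qed
  have "continuous_on {j1..j2} (pot_Icc k1 k2)"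
    unfolding pot_Icc_def by (intro continuous_intros) auto
  then have "(LBINT y. indicator {j1..j2} y *\<^sub>R pot_Icc k1 k2 y) = P j2 - P j1"
    by (intro integral_FTC_atLeastAtMost[OF assms])
       (auto simp: has_real_derivative_iff_has_vector_derivative[symmetric] intro!: DERIV_subset[OF P'])
  also have "P j2 - P j1 = mutual_energy_Icc j1 j2 k1 k2"
    unfolding P_def mutual_energy_Icc_def by (simp add: field_simps)
  finally show ?thesis unfolding set_lebesgue_integral_def .
qed

lemma abs_cube_combination_ge_aux:
  fixes u w d :: real
  assumes "0 \<le> w" "w \<le> d" "d \<le> u" "u + w \<le> 2*pi"
  shows "6*(u^2-w^2)*d^2/(4*pi) \<le> 6*u*d^2 - 2*d^3 - 6*d*w^2 + 2*w^3"
proof -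
  have p: "pi > 0" by simp
  have a1: "(u^2-w^2)/(4*pi) \<le> (u - w)/2"
  proof -
    have "u^2-w^2 = (u-w)*(u+w)" by (simp add: algebra_simps power2_eq_square)
    also have "\<dots> \<le> (u-w)*(2*pi)" using assms by (intro mult_left_mono) auto
    finally show ?thesis using p by (simp add: field_simps)
  qed
  have "6*(u^2-w^2)*d^2/(4*pi) = 6*d^2*((u^2-w^2)/(4*pi))" by (simp add: field_simps)
  also have "\<dots> \<le> 6*d^2*((u - w)/2)" using a1 by (intro mult_left_mono) auto
  also have "\<dots> = 3*(u-w)*d^2" by simp
  finally have A: "6*(u^2-w^2)*d^2/(4*pi) \<le> 3*(u-w)*d^2" .
  have B: "(d-w)^3 \<le> (u-w)*d^2"
  proof -
    have "(d-w)^3 = (d-w)*(d-w)^2" by (simp add: power3_eq_cube power2_eq_square)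
    also have "\<dots> \<le> (u-w)*(d-w)^2" using assms by (intro mult_right_mono) auto
    also have "\<dots> \<le> (u-w)*d^2" using assms by (intro mult_left_mono power_mono) auto
    finally show ?thesis .
  qed
  have C: "6*u*d^2 - 2*d^3 - 6*d*w^2 + 2*w^3 = 6*(u-w)*d^2 - 2*(d-w)^3"
    by (simp add: algebra_simps power3_eq_cube power2_eq_square)
  have "0 \<le> (u-w)*d^2" using assms by simp
  then show ?thesis using A B C by linarith
qed

lemma abs_cube_combination_ge_far:
  fixes u w d :: real
  assumes "0 \<le> w" "w \<le> u" "u \<le> d" "d + u \<le> 2*pi"
  shows "6*(u^2-w^2)*d^2/(4*pi) \<le> 6*d*(u^2-w^2) - 2*(u^3-w^3)"
proof -
  have p: "pi > 0" by simp
  have ii: "6*(u^2-w^2)*u^2/(4*pi) \<le> 6*u*u^2 - 2*u^3 - 6*u*w^2 + 2*w^3"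
    using abs_cube_combination_ge_aux[of w u u] assms by simp
  have P: "0 \<le> u^2-w^2" using assms by (simp add: power_mono)
  have m: "u*(1 - u/(4*pi)) \<le> d*(1 - d/(4*pi))"
  proof -
    have "d*(1 - d/(4*pi)) - u*(1 - u/(4*pi)) = (d-u)*(1 - (d+u)/(4*pi))"
      using p by (simp add: field_simps power2_eq_square)
    also have "\<dots> \<ge> 0" using assms p by (intro mult_nonneg_nonneg) (auto simp: field_simps)
    finally show ?thesis by simp
  qed
  have "6*(u^2-w^2)*d^2/(4*pi) = 6*(u^2-w^2)*d - 6*(u^2-w^2)*(d*(1 - d/(4*pi)))"
    using p by (simp add: field_simps power2_eq_square)
  also have "\<dots> \<le> 6*(u^2-w^2)*d - 6*(u^2-w^2)*(u*(1 - u/(4*pi)))"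
    using m P by (simp add: mult_left_mono)
  also have "6*(u^2-w^2)*(u*(1 - u/(4*pi))) = 6*(u^2-w^2)*u - 6*(u^2-w^2)*u^2/(4*pi)"
    using p by (simp add: field_simps power2_eq_square)
  finally have "6*(u^2-w^2)*d^2/(4*pi) \<le> 6*(u^2-w^2)*d - 6*(u^2-w^2)*u + 6*(u^2-w^2)*u^2/(4*pi)"
    by simp
  also have "\<dots> \<le> 6*(u^2-w^2)*d - 6*(u^2-w^2)*u + (6*u*u^2 - 2*u^3 - 6*u*w^2 + 2*w^3)"
    using ii by simp
  also have "\<dots> = 6*d*(u^2-w^2) - 2*(u^3-w^3)"
    by (simp add: algebra_simps power3_eq_cube power2_eq_square)
  finally show ?thesis .
qed

lemma abs_cube_combination_ge_nonneg:
  fixes u w d :: real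
  assumes "0 \<le> w" "w \<le> u" "u + w \<le> 2*pi" "0 \<le> d" "d + u \<le> 2*pi"
  shows "6*(u^2-w^2)*d^2/(4*pi) \<le> \<bar>u-d\<bar>^3 + \<bar>u+d\<bar>^3 - \<bar>d+w\<bar>^3 - \<bar>d-w\<bar>^3 - (2*u^3 - 2*w^3)"
proof -
  have p: "pi > 0" by simp
  consider "d \<le> w" | "w \<le> d" "d \<le> u" | "u \<le> d" by linarith
  then show ?thesis
  proof cases
    case 1
    have e: "\<bar>u-d\<bar>^3 + \<bar>u+d\<bar>^3 - \<bar>d+w\<bar>^3 - \<bar>d-w\<bar>^3 - (2*u^3 - 2*w^3) = 6*(u-w)*d^2"
    proof -
      have "\<bar>u-d\<bar> = u - d" "\<bar>u+d\<bar> = u+d" "\<bar>d+w\<bar> = d+w" "\<bar>d-w\<bar> = w-d"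
        using 1 assms by auto
      then show ?thesis by (simp add: algebra_simps power3_eq_cube power2_eq_square)
    qed
    have a1: "(u^2-w^2)/(4*pi) \<le> (u - w)"
    proof -
      have "u^2-w^2 = (u-w)*(u+w)" by (simp add: algebra_simps power2_eq_square)
      also have "\<dots> \<le> (u-w)*(4*pi)" using assms p by (intro mult_left_mono) auto
      finally show ?thesis using p by (simp add: field_simps)
    qed
    have "6*(u^2-w^2)*d^2/(4*pi) = 6*d^2*((u^2-w^2)/(4*pi))" by (simp add: field_simps)
    also have "\<dots> \<le> 6*d^2*(u - w)" using a1 by (intro mult_left_mono) auto
    finally show ?thesis using e by (simp add: algebra_simps)
  next
    case 2
    have e: "\<bar>u-d\<bar>^3 + \<bar>u+d\<bar>^3 - \<bar>d+w\<bar>^3 - \<bar>d-w\<bar>^3 - (2*u^3 - 2*w^3)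
             = 6*u*d^2 - 2*d^3 - 6*d*w^2 + 2*w^3"
    proof -
      have "\<bar>u-d\<bar> = u - d" "\<bar>u+d\<bar> = u+d" "\<bar>d+w\<bar> = d+w" "\<bar>d-w\<bar> = d-w"
        using 2 assms by auto
      then show ?thesis by (simp add: algebra_simps power3_eq_cube power2_eq_square)
    qed
    show ?thesis unfolding e using abs_cube_combination_ge_aux[of w d u] 2 assms by simp
  next
    case 3
    have "\<bar>u-d\<bar> = d - u" "\<bar>u+d\<bar> = u+d" "\<bar>d+w\<bar> = d+w" "\<bar>d-w\<bar> = d-w"
      using 3 assms by auto
    then have "\<bar>u-d\<bar>^3 + \<bar>u+d\<bar>^3 - \<bar>d+w\<bar>^3 - \<bar>d-w\<bar>^3 - (2*u^3 - 2*w^3)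
        = 6*d*(u^2-w^2) - 2*(u^3-w^3)"
      by (simp add: algebra_simps power3_eq_cube power2_eq_square)
    then show ?thesis using abs_cube_combination_ge_far[of w u d] 3 assms by simp
  qed
qed

lemma abs_cube_combination_ge:
  fixes u w d :: real
  assumes "\<bar>w\<bar> \<le> u" "u + \<bar>w\<bar> \<le> 2*pi" "\<bar>d\<bar> + u \<le> 2*pi"
  shows "6*(u^2-w^2)*d^2/(4*pi) \<le> \<bar>u-d\<bar>^3 + \<bar>u+d\<bar>^3 - \<bar>d+w\<bar>^3 - \<bar>d-w\<bar>^3 - (2*u^3 - 2*\<bar>w\<bar>^3)"
proof -
  have c: "6*(u^2-\<bar>w\<bar>^2)*\<bar>d\<bar>^2/(4*pi) \<le> \<bar>u-\<bar>d\<bar>\<bar>^3 + \<bar>u+\<bar>d\<bar>\<bar>^3 - \<bar>\<bar>d\<bar>+\<bar>w\<bar>\<bar>^3 - \<bar>\<bar>d\<bar>-\<bar>w\<bar>\<bar>^3 - (2*u^3 - 2*\<bar>w\<bar>^3)"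
    by (rule abs_cube_combination_ge_nonneg) (use assms in auto)
  have s1: "\<bar>u-\<bar>d\<bar>\<bar>^3 + \<bar>u+\<bar>d\<bar>\<bar>^3 = \<bar>u-d\<bar>^3 + \<bar>u+d\<bar>^3"
    by (cases "d \<ge> 0") (auto simp: abs_minus_commute add.commute)
  have s2: "\<bar>\<bar>d\<bar>+\<bar>w\<bar>\<bar>^3 + \<bar>\<bar>d\<bar>-\<bar>w\<bar>\<bar>^3 = \<bar>d+w\<bar>^3 + \<bar>d-w\<bar>^3"
  proof (cases "d \<ge> 0"; cases "w \<ge> 0")
    assume "d \<ge> 0" "w \<ge> 0" then show ?thesis by simp
  next
    assume "d \<ge> 0" "\<not> w \<ge> 0" then show ?thesis by (simp add: add.commute)
  next
    assume "\<not> d \<ge> 0" "w \<ge> 0"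
    then have "\<bar>\<bar>d\<bar>+\<bar>w\<bar>\<bar> = \<bar>d-w\<bar>" "\<bar>\<bar>d\<bar>-\<bar>w\<bar>\<bar> = \<bar>d+w\<bar>" by auto
    then show ?thesis by simp
  next
    assume "\<not> d \<ge> 0" "\<not> w \<ge> 0"
    then have "\<bar>\<bar>d\<bar>+\<bar>w\<bar>\<bar> = \<bar>d+w\<bar>" "\<bar>\<bar>d\<bar>-\<bar>w\<bar>\<bar> = \<bar>d-w\<bar>" by auto
    then show ?thesis by simp
  qed
  have s3: "\<bar>w\<bar>^2 = w^2" "\<bar>d\<bar>^2 = d^2" by simp_all
  show ?thesis using c s1 s2 s3 by simp
qed

lemma mutual_energy_Icc_le_centered:
  assumes "-pi \<le> j1" "j1 \<le> j2" "j2 \<le> pi" "-pi \<le> k1" "k1 \<le> k2" "k2 \<le> pi"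
  shows "mutual_energy_Icc j1 j2 k1 k2 \<le> mutual_energy_Icc (-(j2-j1)/2) ((j2-j1)/2) (-(k2-k1)/2) ((k2-k1)/2)"
proof -
  (* With lengths t, a and midpoints c, d, centring gains t a c d / (2 pi) plus a cubic term that
     abs_cube_combination_ge bounds below by t a (c - d)^2 / (8 pi); the sum is t a (c + d)^2 / (8 pi). *)
  define t a c d where "t = j2 - j1" "a = k2 - k1" "c = (j1+j2)/2" "d = (k1+k2)/2"
  define u w \<delta> where "u = (t+a)/2" "w = (t-a)/2" "\<delta> = c - d"
  have p: "pi > 0" by simp
  have j: "j1 = c - t/2" "j2 = c + t/2" "k1 = d - a/2" "k2 = d + a/2"
    by (simp_all add: t_a_c_d_def field_simps)
  have A1: "\<bar>k2-j2\<bar> = \<bar>\<delta>+w\<bar>" "\<bar>k1-j2\<bar> = \<bar>u+\<delta>\<bar>" "\<bar>k2-j1\<bar> = \<bar>u-\<delta>\<bar>" "\<bar>k1-j1\<bar> = \<bar>\<delta>-w\<bar>"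
  proof -
    have "k2-j2 = -(\<delta>+w)" "k1-j2 = -(u+\<delta>)" "k2-j1 = u-\<delta>" "k1-j1 = -(\<delta>-w)"
      unfolding j u_w_\<delta>_def by (simp_all add: field_simps)
    then show "\<bar>k2-j2\<bar> = \<bar>\<delta>+w\<bar>" "\<bar>k1-j2\<bar> = \<bar>u+\<delta>\<bar>" "\<bar>k2-j1\<bar> = \<bar>u-\<delta>\<bar>" "\<bar>k1-j1\<bar> = \<bar>\<delta>-w\<bar>"
      by (simp_all only: abs_minus_cancel)
  qed
  have A2: "\<bar>(k2-k1)/2 - (j2-j1)/2\<bar> = \<bar>w\<bar>" "\<bar>-(k2-k1)/2 - (j2-j1)/2\<bar> = u"
     "\<bar>(k2-k1)/2 - -(j2-j1)/2\<bar> = u" "\<bar>-(k2-k1)/2 - -(j2-j1)/2\<bar> = \<bar>w\<bar>"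
  proof -
    have e: "(k2-k1)/2 - (j2-j1)/2 = -w" "-(k2-k1)/2 - (j2-j1)/2 = -u"
     "(k2-k1)/2 - -(j2-j1)/2 = u" "-(k2-k1)/2 - -(j2-j1)/2 = w"
      unfolding u_w_\<delta>_def t_a_c_d_def by (simp_all add: field_simps)
    have u0: "u \<ge> 0" using assms unfolding u_w_\<delta>_def t_a_c_d_def by simp
    show "\<bar>(k2-k1)/2 - (j2-j1)/2\<bar> = \<bar>w\<bar>" "\<bar>-(k2-k1)/2 - (j2-j1)/2\<bar> = u"
     "\<bar>(k2-k1)/2 - -(j2-j1)/2\<bar> = u" "\<bar>-(k2-k1)/2 - -(j2-j1)/2\<bar> = \<bar>w\<bar>"
      unfolding e using u0 by simp_all
  qed
  have L: "mutual_energy_Icc j1 j2 k1 k2 = pi*a*t/2 - t*a*c*d/(2*pi)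
      + (\<bar>\<delta>+w\<bar>^3 - \<bar>u+\<delta>\<bar>^3 - \<bar>u-\<delta>\<bar>^3 + \<bar>\<delta>-w\<bar>^3)/12"
  proof -
    have "(j2^2-j1^2)*(k2^2-k1^2)/(8*pi) = t*a*c*d/(2*pi)"
      unfolding j by (simp add: field_simps power2_eq_square)
    then show ?thesis unfolding mutual_energy_Icc_def A1 by (simp add: t_a_c_d_def)
  qed
  have R: "mutual_energy_Icc (-(j2-j1)/2) ((j2-j1)/2) (-(k2-k1)/2) ((k2-k1)/2) = pi*a*t/2 + (2*\<bar>w\<bar>^3 - 2*u^3)/12"
  proof -
    have "(((j2-j1)/2)^2-(-(j2-j1)/2)^2) = 0" by (simp add: power2_eq_square algebra_simps)
    then show ?thesis unfolding mutual_energy_Icc_def A2 by (simp add: t_a_c_d_def algebra_simps)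
  qed
  have t0: "0 \<le> t" "0 \<le> a" using assms unfolding t_a_c_d_def by auto
  have cr: "6*(u^2-w^2)*\<delta>^2/(4*pi) \<le> \<bar>u-\<delta>\<bar>^3 + \<bar>u+\<delta>\<bar>^3 - \<bar>\<delta>+w\<bar>^3 - \<bar>\<delta>-w\<bar>^3 - (2*u^3 - 2*\<bar>w\<bar>^3)"
  proof (rule abs_cube_combination_ge)
    show "\<bar>w\<bar> \<le> u" using t0 unfolding u_w_\<delta>_def by auto
    show "u + \<bar>w\<bar> \<le> 2*pi" using assms unfolding u_w_\<delta>_def t_a_c_d_def by (auto simp: abs_if field_simps)
    show "\<bar>\<delta>\<bar> + u \<le> 2*pi" using assms unfolding u_w_\<delta>_def t_a_c_d_def by (auto simp: abs_if field_simps)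
  qed
  have uw: "u^2 - w^2 = t*a" unfolding u_w_\<delta>_def by (simp add: field_simps power2_eq_square)
  have key: "t*a*c*d/(2*pi) + 6*(t*a)*\<delta>^2/(4*pi)/12 = t*a*(c+d)^2/(8*pi)"
    unfolding u_w_\<delta>_def using p by (simp add: field_simps power2_eq_square)
  have "0 \<le> t*a*(c+d)^2/(8*pi)" using t0 p by simp
  then show ?thesis unfolding L R using cr key uw by (simp add: field_simps)
qed

lemma pot_Icc_centering_gain_outside:
  fixes t c e :: real
  assumes "0 \<le> t" "t/2 \<le> e" "e + t/2 \<le> 2*pi" "t \<le> 2*pi"
  shows "t^2/8 \<le> (c+e)*t*c/(2*pi) + t*e/2"
proof -
  have p: "pi > 0" by simp
  have h1: "0 \<le> (e - t/2)*(pi - (e+t/2)/4)" using assms by (intro mult_nonneg_nonneg) auto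
  have h2: "0 \<le> t*(4*pi - t)/16" using assms by (intro divide_nonneg_nonneg mult_nonneg_nonneg) auto
  have h3: "- (e^2)/4 + pi*e - pi*t/4 = (e - t/2)*(pi - (e+t/2)/4) + t*(4*pi - t)/16"
    by (simp add: field_simps power2_eq_square)
  have h4: "0 \<le> - (e^2)/4 + pi*e - pi*t/4" using h1 h2 h3 by linarith
  have h5: "(c+e)*c/(2*pi) + e/2 - t/8 = (c+e/2)^2/(2*pi) + (- (e^2)/4 + pi*e - pi*t/4)/(2*pi)"
    using p by (simp add: field_simps power2_eq_square)
  have "0 \<le> (c+e)*c/(2*pi) + e/2 - t/8" unfolding h5 using h4 p by simp
  then have "0 \<le> t * ((c+e)*c/(2*pi) + e/2 - t/8)" using assms by simp
  then show ?thesis by (simp add: field_simps power2_eq_square)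
qed

lemma pot_Icc_centering_gain:
  fixes t c e :: real
  assumes t: "0 \<le> t" "t \<le> 2*pi" and e: "\<bar>e\<bar> + t/2 \<le> 2*pi"
  shows "t^2/8 \<le> (c+e)*t*c/(2*pi) + ((t/2-e)*\<bar>t/2-e\<bar> + (t/2+e)*\<bar>t/2+e\<bar>)/4"
proof -
  consider "\<bar>e\<bar> \<le> t/2" | "t/2 < e" | "e < -t/2" by linarith
  then show ?thesis
  proof cases
    case 1
    have a1: "\<bar>t/2-e\<bar> = t/2-e" and a2: "\<bar>t/2+e\<bar> = t/2+e" using 1 by auto
    have q: "((t/2-e)*\<bar>t/2-e\<bar> + (t/2+e)*\<bar>t/2+e\<bar>)/4 = t^2/8 + e^2/2"
      unfolding a1 a2 by (simp add: field_simps power2_eq_square)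
    have "0 \<le> t*(c+e/2)^2 + (pi - t/4)*e^2" using t by (intro add_nonneg_nonneg mult_nonneg_nonneg) auto
    moreover have "(c+e)*t*c/(2*pi) + e^2/2 = (t*(c+e/2)^2 + (pi - t/4)*e^2)/(2*pi)"
      by (simp add: field_simps power2_eq_square)
    ultimately have "0 \<le> (c+e)*t*c/(2*pi) + e^2/2" by simp
    then show ?thesis unfolding q by linarith
  next
    case 2
    have a1: "\<bar>t/2-e\<bar> = e - t/2" and a2: "\<bar>t/2+e\<bar> = t/2+e" using 2 t by auto
    have q: "((t/2-e)*\<bar>t/2-e\<bar> + (t/2+e)*\<bar>t/2+e\<bar>)/4 = t*e/2"
      unfolding a1 a2 by (simp add: field_simps power2_eq_square)
    show ?thesis unfolding q using pot_Icc_centering_gain_outside[of t e c] 2 t e by simp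
  next
    case 3
    have a1: "\<bar>t/2-e\<bar> = t/2 - e" and a2: "\<bar>t/2+e\<bar> = -(t/2+e)" using 3 t by auto
    have q: "((t/2-e)*\<bar>t/2-e\<bar> + (t/2+e)*\<bar>t/2+e\<bar>)/4 = t*(-e)/2"
      unfolding a1 a2 by (simp add: field_simps power2_eq_square)
    have "t^2/8 \<le> ((-c)+(-e))*t*(-c)/(2*pi) + t*(-e)/2"
      using pot_Icc_centering_gain_outside[of t "-e" "-c"] 3 t e by simp
    then show ?thesis unfolding q by (simp add: algebra_simps)
  qed
qed

lemma pot_Icc_le_centered:
  assumes "-pi \<le> a" "a \<le> b" "b \<le> pi" "-pi \<le> y" "y \<le> pi"
  shows "pot_Icc a b y \<le> pot_Icc (-(b-a)/2) ((b-a)/2) 0"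
proof -
  define t c e where "t = b - a" "c = (a+b)/2" "e = y - c"
  have ab: "a = c - t/2" "b = c + t/2" "y = c + e" by (simp_all add: t_c_e_def field_simps)
  have "a - y = -(t/2+e)" unfolding ab by simp
  then have "(a-y)*\<bar>a-y\<bar> = -((t/2+e)*\<bar>t/2+e\<bar>)"
    by (metis abs_minus_cancel mult_minus_left)
  moreover have "b - y = t/2 - e" "b - a = t" unfolding ab by simp_all
  moreover have "y*(b^2-a^2)/(4*pi) = (c+e)*t*c/(2*pi)"
    unfolding ab by (simp add: field_simps power2_eq_square)
  ultimately have "pot_Icc a b y = pi*t/2 - (c+e)*t*c/(2*pi)
      - ((t/2-e)*\<bar>t/2-e\<bar> + (t/2+e)*\<bar>t/2+e\<bar>)/4"
    unfolding pot_Icc_def by simp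
  moreover have "pot_Icc (-(b-a)/2) ((b-a)/2) 0 = pi*t/2 - t^2/8"
    using assms(2) unfolding pot_Icc_def t_c_e_def by (simp add: power2_eq_square field_simps)
  moreover have "t^2/8 \<le> (c+e)*t*c/(2*pi) + ((t/2-e)*\<bar>t/2-e\<bar> + (t/2+e)*\<bar>t/2+e\<bar>)/4"
    by (rule pot_Icc_centering_gain) (use assms in \<open>auto simp: t_c_e_def abs_if field_simps\<close>)
  ultimately show ?thesis by linarith
qed

section \<open>A bathtub principle for concave functions\<close>

lemma fmeasurable_Icc: "{l..r::real} \<in> fmeasurable lborel"
  by (rule fmeasurable_compact) simp

lemma fmeasurable_subset_Icc:
  "E \<in> sets borel \<Longrightarrow> E \<subseteq> {l..r::real} \<Longrightarrow> E \<in> fmeasurable lborel"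
  by (rule fmeasurableI2[OF fmeasurable_Icc]) auto

lemma measure_subset_Icc_le:
  assumes "E \<in> sets borel" "E \<subseteq> {l..r::real}" "l \<le> r"
  shows "measure lborel E \<le> r - l"
  using measure_mono_fmeasurable[OF assms(2) _ fmeasurable_Icc] assms by simp

lemma set_integral_const_subset_Icc:
  "E \<in> sets borel \<Longrightarrow> E \<subseteq> {l..r::real} \<Longrightarrow> (LINT x:E|lborel. c) = measure lborel E * c"
  using set_integral_const[of E lborel c] fmeasurable_subset_Icc[of E l r] by (auto simp: fmeasurable_def)

lemma set_integrable_subset_Icc:
  fixes h :: "real \<Rightarrow> real"
  assumes "continuous_on {l..r} h" "E \<in> sets borel" "E \<subseteq> {l..r}"
  shows "set_integrable lborel E h"
  by (rule set_integrable_subset[OF borel_integrable_atLeastAtMost'[OF assms(1)]]) (use assms in auto)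

lemma set_integral_measure_zero:
  fixes h :: "real \<Rightarrow> real"
  assumes "E \<in> sets borel" "E \<subseteq> {l..r}" "measure lborel E = 0"
  shows "(LINT x:E|lborel. h x) = 0"
proof -
  have "E \<in> null_sets lborel"
    using assms fmeasurable_subset_Icc[OF assms(1,2)] by (auto simp: emeasure_eq_measure2)
  then have "AE x in lborel. indicator E x *\<^sub>R h x = 0"
    by (rule AE_mp[OF AE_not_in]) auto
  then show ?thesis unfolding set_lebesgue_integral_def by (rule integral_eq_zero_AE)
qed

lemma concave_onD_three_point:
  fixes h :: "real \<Rightarrow> real"
  assumes "concave_on S h" "x \<in> S" "z \<in> S" "x < y" "y < z"
  shows "(z - y) * h x + (y - x) * h z \<le> (z - x) * h y"
proof -
  define t where "t = (y - x) / (z - x)"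
  have "z - x \<noteq> 0" using assms by simp
  have t: "0 \<le> t" "t \<le> 1" using assms unfolding t_def by (auto simp: field_simps)
  have tzx: "t * (z - x) = y - x" using \<open>z - x \<noteq> 0\<close> unfolding t_def by simp
  then have "(1 - t) *\<^sub>R x + t *\<^sub>R z = y" by (simp add: algebra_simps)
  then have "(1 - t) * h x + t * h z \<le> h y" using concave_onD[OF assms(1) t assms(2,3)] by simp
  then have "(z - x) * ((1 - t) * h x + t * h z) \<le> (z - x) * h y"
    using assms by (intro mult_left_mono) auto
  moreover have "(z - x) * ((1 - t) * h x + t * h z) = ((z - x) - t * (z - x)) * h x + t * (z - x) * h z"
    by (simp add: algebra_simps)
  ultimately have "((z - x) - t * (z - x)) * h x + t * (z - x) * h z \<le> (z - x) * h y" by simp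
  then show ?thesis unfolding tzx by simp
qed

lemma concave_on_le_if_le_left:
  fixes h :: "real \<Rightarrow> real"
  assumes "concave_on S h" "x \<in> S" "z \<in> S" "x < y" "y < z" "h y \<le> h x"
  shows "h z \<le> h y"
proof -
  have "(z - y) * h y \<le> (z - y) * h x" using assms by (intro mult_left_mono) auto
  then have "(y - x) * h z \<le> (y - x) * h y"
    using concave_onD_three_point[OF assms(1-5)] by (simp add: algebra_simps)
  then show ?thesis using assms by simp
qed

lemma concave_on_le_if_le_right:
  fixes h :: "real \<Rightarrow> real"
  assumes "concave_on S h" "x \<in> S" "z \<in> S" "x < y" "y < z" "h y \<le> h z"
  shows "h x \<le> h y"
proof -
  have "(y - x) * h y \<le> (y - x) * h z" using assms by (intro mult_left_mono) auto
  then have "(z - y) * h x \<le> (z - y) * h y"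
    using concave_onD_three_point[OF assms(1-5)] by (simp add: algebra_simps)
  then show ?thesis using assms by simp
qed

lemma concave_superlevel_Icc_of_endpoints:
  fixes h :: "real \<Rightarrow> real"
  assumes conc: "concave_on {l..r} h" and qz: "l \<le> q" "q < z" "z \<le> r"
    and left: "l < q \<Longrightarrow> h q \<le> h z" and right: "z < r \<Longrightarrow> h z \<le> h q"
  shows "\<And>y. y \<in> {q..z} \<Longrightarrow> min (h q) (h z) \<le> h y"
    and "\<And>y. y \<in> {l..r} - {q..z} \<Longrightarrow> h y \<le> min (h q) (h z)"
proof -
  fix y assume "y \<in> {q..z}"
  have "concave_on {q..z} h"
    using conc qz unfolding concave_on_def by (auto intro: convex_on_subset)
  then show "min (h q) (h z) \<le> h y" using \<open>y \<in> {q..z}\<close> by (rule concave_on_ge_min)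
next
  fix y assume y: "y \<in> {l..r} - {q..z}"
  show "h y \<le> min (h q) (h z)"
  proof (cases "y < q")
    case True
    then have "h y \<le> h q" using concave_on_le_if_le_right[OF conc, of y z q] left y qz by auto
    then show ?thesis using left y True by auto
  next
    case False
    then have "h y \<le> h z" using concave_on_le_if_le_left[OF conc, of q y z] right y qz by auto
    then show ?thesis using right y False by auto
  qed
qed

lemma concave_superlevel_Icc:
  fixes h :: "real \<Rightarrow> real"
  assumes cont: "continuous_on {l..r} h" and conc: "concave_on {l..r} h"
    and a: "0 < a" "a \<le> r - l"
  obtains q s where "l \<le> q" "q + a \<le> r" "\<And>y. y \<in> {q..q+a} \<Longrightarrow> s \<le> h y"
    "\<And>y. y \<in> {l..r} - {q..q+a} \<Longrightarrow> h y \<le> s"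
proof -
  have "\<exists>q. l \<le> q \<and> q + a \<le> r \<and> (l < q \<longrightarrow> h q \<le> h (q + a)) \<and> (q + a < r \<longrightarrow> h (q + a) \<le> h q)"
  proof -
    consider "h (l + a) \<le> h l" | "h (r - a) \<le> h r" | "h l < h (l + a)" "h r < h (r - a)"
      by linarith
    then show ?thesis
    proof cases
      case 1
      then show ?thesis using a by (intro exI[of _ l]) auto
    next
      case 2
      then show ?thesis using a by (intro exI[of _ "r - a"]) auto
    next
      case 3
      have "continuous_on {l..r - a} (\<lambda>q. h (q + a) - h q)"
        by (intro continuous_intros continuous_on_compose2[OF cont] continuous_on_subset[OF cont])
          (use a in auto)
      then obtain q where "l \<le> q" "q \<le> r - a" "h (q + a) = h q"
        using IVT2'[of "\<lambda>q. h (q + a) - h q" "r - a" 0 l] 3 a by auto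
      then show ?thesis by (intro exI[of _ q]) auto
    qed
  qed
  then obtain q where q: "l \<le> q" "q + a \<le> r" "l < q \<Longrightarrow> h q \<le> h (q + a)" "q + a < r \<Longrightarrow> h (q + a) \<le> h q"
    by blast
  show ?thesis
    by (rule that[OF q(1,2) concave_superlevel_Icc_of_endpoints[OF conc q(1) _ q(2-4)]]) (use a in auto)
qed

lemma set_integral_le_superlevel:
  fixes h :: "real \<Rightarrow> real"
  assumes cont: "continuous_on {l..r} h"
    and A: "A \<in> sets borel" "A \<subseteq> {l..r}" and K: "K \<in> sets borel" "K \<subseteq> {l..r}"
    and mK: "measure lborel K = measure lborel A"
    and ge: "\<And>y. y \<in> K \<Longrightarrow> s \<le> h y" and le: "\<And>y. y \<in> {l..r} - K \<Longrightarrow> h y \<le> s"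
  shows "(LINT x:A|lborel. h x) \<le> (LINT x:K|lborel. h x)"
proof -
  have int: "set_integrable lborel S h" if "S \<in> sets borel" "S \<subseteq> {l..r}" for S
    by (rule set_integrable_subset_Icc[OF cont that])
  have split: "(LINT x:S|lborel. h x) = (LINT x:A \<inter> K|lborel. h x) + (LINT x:S - T|lborel. h x)"
    if "S \<in> sets borel" "S \<subseteq> {l..r}" "T \<in> sets borel" "A \<inter> K = S \<inter> T" for S T
  proof -
    have "S = (A \<inter> K) \<union> (S - T)" "(A \<inter> K) \<inter> (S - T) = {}" using that by auto
    moreover have "set_integrable lborel (A \<inter> K) h" "set_integrable lborel (S - T) h"
      using that A K by (auto intro!: int)
    ultimately show ?thesis by (metis set_integral_Un)
  qed
  have "(LINT x:A - K|lborel. h x) \<le> (LINT x:A - K|lborel. s)"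
    using A K le by (intro set_integral_mono int set_integrable_subset_Icc[OF continuous_on_const]) auto
  also have "\<dots> = measure lborel (K - A) * s"
  proof -
    have "measure lborel (S - (A \<inter> K)) = measure lborel S - measure lborel (A \<inter> K)"
      if "S \<in> sets borel" "S \<subseteq> {l..r}" "A \<inter> K \<subseteq> S" for S
      using A K that by (intro measurable_measure_Diff fmeasurable_subset_Icc) auto
    moreover have "A - (A \<inter> K) = A - K" "K - (A \<inter> K) = K - A" by auto
    ultimately have "measure lborel (A - K) = measure lborel (K - A)"
      using A K mK by (metis Int_lower1 Int_lower2)
    then show ?thesis using A K by (subst set_integral_const_subset_Icc) auto
  qed
  also have "\<dots> = (LINT x:K - A|lborel. s)"
    using A K by (subst set_integral_const_subset_Icc) auto
  also have "\<dots> \<le> (LINT x:K - A|lborel. h x)"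
    using A K ge by (intro set_integral_mono int set_integrable_subset_Icc[OF continuous_on_const]) auto
  finally show ?thesis
    using split[of A K] split[of K A] A K by (auto simp: Int_commute)
qed

lemma set_integral_concave_le_Icc:
  fixes h :: "real \<Rightarrow> real"
  assumes cont: "continuous_on {l..r} h" and conc: "concave_on {l..r} h" and "l \<le> r"
    and A: "A \<in> sets borel" "A \<subseteq> {l..r}"
  obtains q where "l \<le> q" "q + measure lborel A \<le> r"
    "(LINT x:A|lborel. h x) \<le> (LINT x:{q..q + measure lborel A}|lborel. h x)"
proof (cases "measure lborel A = 0")
  case True
  have "(LINT x:A|lborel. h x) = 0" "(LINT x:{l..l}|lborel. h x) = 0"
    using True A by (auto intro: set_integral_measure_zero)
  with True \<open>l \<le> r\<close> show ?thesis by (intro that[of l]) auto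
next
  case False
  define a where "a = measure lborel A"
  have a: "0 < a" "a \<le> r - l"
    using False measure_subset_Icc_le[OF A \<open>l \<le> r\<close>] unfolding a_def
    by (auto simp: order_less_le)
  obtain q s where q: "l \<le> q" "q + a \<le> r" "\<And>y. y \<in> {q..q+a} \<Longrightarrow> s \<le> h y"
    "\<And>y. y \<in> {l..r} - {q..q+a} \<Longrightarrow> h y \<le> s"
    using concave_superlevel_Icc[OF cont conc a] by blast
  have "(LINT x:A|lborel. h x) \<le> (LINT x:{q..q+a}|lborel. h x)"
    by (rule set_integral_le_superlevel[OF cont A, of _ s]) (use q a in \<open>auto simp: a_def\<close>)
  with q show ?thesis by (intro that[of q]) (auto simp: a_def)
qed

section \<open>Potentials of Borel subsets of the interval\<close>

lemma set_integrable_G: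
  "E \<in> sets borel \<Longrightarrow> E \<subseteq> {-pi..pi} \<Longrightarrow> set_integrable lborel E (\<lambda>x. G x y)"
  by (rule set_integrable_subset_Icc[OF continuous_on_G1])

lemma set_pot_nonneg:
  assumes "E \<in> sets borel" "E \<subseteq> {-pi..pi}" "y \<in> {-pi..pi}"
  shows "0 \<le> set_pot E y"
proof -
  have "(LINT x:E|lborel. 0) \<le> set_pot E y"
    unfolding set_pot_def using assms G_nonneg
    by (intro set_integral_mono set_integrable_G set_integrable_subset_Icc[OF continuous_on_const]) auto
  then show ?thesis by simp
qed

lemma set_pot_le:
  assumes "E \<in> sets borel" "E \<subseteq> {-pi..pi}" "y \<in> {-pi..pi}"
  shows "set_pot E y \<le> measure lborel E * (pi / 2)"
proof -
  have "set_pot E y \<le> (LINT x:E|lborel. pi / 2)"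
    unfolding set_pot_def using assms G_le
    by (intro set_integral_mono set_integrable_G set_integrable_subset_Icc[OF continuous_on_const]) auto
  then show ?thesis using set_integral_const_subset_Icc[OF assms(1,2)] by simp
qed

lemma set_pot_lipschitz:
  assumes "E \<in> sets borel" "E \<subseteq> {-pi..pi}"
  shows "\<bar>set_pot E y - set_pot E y'\<bar> \<le> measure lborel E * \<bar>y - y'\<bar>"
proof -
  have int: "set_integrable lborel E (\<lambda>x. G x y - G x y')"
    using assms by (intro set_integral_diff set_integrable_G)
  have "set_pot E y - set_pot E y' = (LINT x:E|lborel. G x y - G x y')"
    unfolding set_pot_def using assms by (intro set_integral_diff(2)[symmetric] set_integrable_G)
  also have "\<bar>\<dots>\<bar> \<le> (LINT x:E|lborel. \<bar>G x y - G x y'\<bar>)"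
    using set_integral_norm_bound[OF int] by simp
  also have "\<dots> \<le> (LINT x:E|lborel. \<bar>y - y'\<bar>)"
    using assms G_lipschitz[of _ y y']
    by (intro set_integral_mono set_integrable_abs set_integral_diff set_integrable_G
        set_integrable_subset_Icc[OF continuous_on_const]) (auto simp: abs_le_iff)
  finally show ?thesis using set_integral_const_subset_Icc[OF assms] by simp
qed

lemma continuous_on_set_pot:
  assumes "E \<in> sets borel" "E \<subseteq> {-pi..pi}"
  shows "continuous_on S (set_pot E)"
  by (rule lipschitz_on_continuous_on[of "measure lborel E"])
    (use set_pot_lipschitz[OF assms] in \<open>auto simp: lipschitz_on_def dist_real_def\<close>)

lemma concave_on_set_pot:
  assumes "E \<in> sets borel" "E \<subseteq> {-pi..pi}" "convex S"
  shows "concave_on S (set_pot E)"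
  unfolding concave_on_iff
proof (intro conjI ballI allI impI \<open>convex S\<close>)
  fix y z u v :: real assume yz: "y \<in> S" "z \<in> S" and uv: "0 \<le> u" "0 \<le> v" "u + v = 1"
  have int: "set_integrable lborel E (\<lambda>x. G x y)" "set_integrable lborel E (\<lambda>x. G x z)"
    using assms by (auto intro: set_integrable_G)
  have "u * set_pot E y + v * set_pot E z = (LINT x:E|lborel. u * G x y + v * G x z)"
    unfolding set_pot_def using int
    by (simp add: set_integral_add set_integral_mult_right set_integrable_mult_right)
  also have "\<dots> \<le> (LINT x:E|lborel. G x (u *\<^sub>R y + v *\<^sub>R z))"
  proof (intro set_integral_mono)
    show "set_integrable lborel E (\<lambda>x. u * G x y + v * G x z)"
      using int by (intro set_integral_add set_integrable_mult_right)
    show "set_integrable lborel E (\<lambda>x. G x (u *\<^sub>R y + v *\<^sub>R z))"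
      using assms(1,2) by (rule set_integrable_G)
    show "u * G x y + v * G x z \<le> G x (u *\<^sub>R y + v *\<^sub>R z)" for x
      using concave_on_G[OF convex_UNIV, of x] uv unfolding concave_on_iff by auto
  qed
  finally show "u * set_pot E y + v * set_pot E z \<le> set_pot E (u *\<^sub>R y + v *\<^sub>R z)"
    unfolding set_pot_def .
qed

lemma set_pot_measurable:
  "E \<in> sets borel \<Longrightarrow> E \<subseteq> {-pi..pi} \<Longrightarrow> set_pot E \<in> borel_measurable borel"
  by (rule borel_measurable_continuous_onI[OF continuous_on_set_pot])

lemma set_integral_set_pot_commute:
  assumes A: "A \<in> sets borel" "A \<subseteq> {-pi..pi}" and E: "E \<in> sets borel" "E \<subseteq> {-pi..pi}"
  shows "(LINT y:A|lborel. set_pot E y) = (LINT x:E|lborel. set_pot A x)"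
proof -
  define g where "g x y = indicator E x * indicator A y * G x y" for x y
  have [measurable]: "A \<in> sets borel" "E \<in> sets borel" using A E by auto
  have G_meas[measurable]: "(\<lambda>(x, y). G x y) \<in> borel_measurable (lborel \<Otimes>\<^sub>M lborel)"
    by (rule G_measurable) auto
  have "integrable (lborel \<Otimes>\<^sub>M lborel) (\<lambda>p. pi / 2 * indicator ({-pi..pi} \<times> {-pi..pi}) p)"
    by (intro integrable_mult_right integrable_real_indicator)
      (auto simp: lborel.emeasure_pair_measure_Times ennreal_mult_less_top)
  then have "integrable (lborel \<Otimes>\<^sub>M lborel) (\<lambda>(x, y). g x y)"
  proof (rule Bochner_Integration.integrable_bound)
    show "(\<lambda>(x, y). g x y) \<in> borel_measurable (lborel \<Otimes>\<^sub>M lborel)"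
      unfolding g_def case_prod_beta' using G_meas[unfolded case_prod_beta'] by measurable
    show "AE p in lborel \<Otimes>\<^sub>M lborel.
        norm ((\<lambda>(x, y). g x y) p) \<le> norm (pi / 2 * indicator ({-pi..pi} \<times> {-pi..pi}) p)"
      using A E G_nonneg G_le by (intro AE_I2) (auto simp: g_def indicator_def)
  qed
  then have "(LBINT y. LBINT x. g x y) = (LBINT x. LBINT y. g x y)"
    by (rule lborel_pair.Fubini_integral)
  moreover have "(LINT y:A|lborel. set_pot E y) = (LBINT y. LBINT x. g x y)"
    unfolding set_lebesgue_integral_def set_pot_def g_def
    by (intro Bochner_Integration.integral_cong refl) (simp flip: integral_mult_right_zero add: mult_ac)
  moreover have "(LINT x:E|lborel. set_pot A x) = (LBINT x. LBINT y. g x y)"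
  proof -
    have "set_pot A x = (LBINT y. indicator A y * G x y)" for x
      unfolding set_pot_def set_lebesgue_integral_def
      by (rule Bochner_Integration.integral_cong) (auto simp: G_commute[of _ x])
    then show ?thesis
      unfolding set_lebesgue_integral_def g_def
      by (intro Bochner_Integration.integral_cong refl) (simp flip: integral_mult_right_zero add: mult_ac)
  qed
  ultimately show ?thesis by simp
qed

lemma set_integral_set_pot_le_centered:
  assumes A: "A \<in> sets borel" "A \<subseteq> {-pi..pi}" and E: "E \<in> sets borel" "E \<subseteq> {-pi..pi}"
  defines "a \<equiv> measure lborel A" and "t \<equiv> measure lborel E"
  shows "(LINT y:A|lborel. set_pot E y) \<le> (LINT y:{-a/2..a/2}|lborel. set_pot {-t/2..t/2} y)"
proof -
  have a: "0 \<le> a" "a \<le> 2 * pi" and t: "0 \<le> t" "t \<le> 2 * pi"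
    using measure_subset_Icc_le[OF A] measure_subset_Icc_le[OF E] by (auto simp: a_def t_def)
  obtain q where q: "-pi \<le> q" "q + a \<le> pi"
    "(LINT y:A|lborel. set_pot E y) \<le> (LINT y:{q..q + a}|lborel. set_pot E y)"
    using set_integral_concave_le_Icc[OF continuous_on_set_pot[OF E] concave_on_set_pot[OF E] _ A]
    unfolding a_def by auto
  have K: "{q..q + a} \<in> sets borel" "{q..q + a} \<subseteq> {-pi..pi}" using q a by auto
  obtain p where p: "-pi \<le> p" "p + t \<le> pi"
    "(LINT x:E|lborel. set_pot {q..q + a} x) \<le> (LINT x:{p..p + t}|lborel. set_pot {q..q + a} x)"
    using set_integral_concave_le_Icc[OF continuous_on_set_pot[OF K] concave_on_set_pot[OF K] _ E]
    unfolding t_def by auto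
  have "(LINT y:A|lborel. set_pot E y) \<le> (LINT x:E|lborel. set_pot {q..q + a} x)"
    using q(3) set_integral_set_pot_commute[OF K E] by simp
  also have "\<dots> \<le> (LINT x:{p..p + t}|lborel. set_pot {q..q + a} x)" by (fact p(3))
  also have "\<dots> = mutual_energy_Icc p (p + t) q (q + a)"
    using a t by (simp add: set_pot_Icc set_integral_pot_Icc)
  also have "\<dots> \<le> mutual_energy_Icc (-t/2) (t/2) (-a/2) (a/2)"
    using mutual_energy_Icc_le_centered[of p "p + t" q "q + a"] p q a t by simp
  also have "\<dots> = (LINT x:{-t/2..t/2}|lborel. set_pot {-a/2..a/2} x)"
    using a t by (simp add: set_pot_Icc set_integral_pot_Icc)
  also have "\<dots> = (LINT y:{-a/2..a/2}|lborel. set_pot {-t/2..t/2} y)"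
    using a t by (intro set_integral_set_pot_commute) auto
  finally show ?thesis .
qed

lemma set_pot_le_centered:
  assumes E: "E \<in> sets borel" "E \<subseteq> {-pi..pi}" and y: "y \<in> {-pi..pi}"
  defines "t \<equiv> measure lborel E"
  shows "set_pot E y \<le> set_pot {-t/2..t/2} 0"
proof -
  have t: "0 \<le> t" unfolding t_def by simp
  have "concave_on {-pi..pi} (\<lambda>x. G x y)"
    using concave_on_G[of "{-pi..pi}" y] by (simp add: G_commute[of _ y])
  then obtain p where p: "-pi \<le> p" "p + t \<le> pi" "set_pot E y \<le> set_pot {p..p + t} y"
    using set_integral_concave_le_Icc[OF continuous_on_G1 _ _ E] unfolding set_pot_def t_def by auto
  note p(3)
  also have "\<dots> = pot_Icc p (p + t) y"
    using t by (simp add: set_pot_Icc)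
  also have "\<dots> \<le> pot_Icc (-t/2) (t/2) 0"
    using pot_Icc_le_centered[of p "p + t" y] p y t by simp
  also have "\<dots> = set_pot {-t/2..t/2} 0"
    using t by (simp add: set_pot_Icc)
  finally show ?thesis .
qed

lemma nn_integral_G_eq_set_pot:
  assumes E: "E \<in> sets borel" "E \<subseteq> {-pi..pi}" and y: "y \<in> {-pi..pi}"
  shows "(\<integral>\<^sup>+ x. ennreal (indicator E x * G x y) \<partial>lborel) = ennreal (set_pot E y)"
proof -
  have "integrable lborel (\<lambda>x. indicator E x * G x y)"
    using set_integrable_G[OF E, of y] unfolding set_integrable_def by simp
  then show ?thesis
    unfolding set_pot_def set_lebesgue_integral_def using E y G_nonneg
    by (subst nn_integral_eq_integral) (auto simp: indicator_def intro!: AE_I2)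
qed

lemma nn_integral_indicator_set_pot:
  assumes B: "B \<in> sets borel" "B \<subseteq> {-pi..pi}" and E: "E \<in> sets borel" "E \<subseteq> {-pi..pi}"
  shows "(\<integral>\<^sup>+ y. indicator B y * ennreal (set_pot E y) \<partial>lborel) = ennreal (LINT y:B|lborel. set_pot E y)"
proof -
  have "(\<integral>\<^sup>+ y. indicator B y * ennreal (set_pot E y) \<partial>lborel) = (\<integral>\<^sup>+ y. ennreal (indicator B y * set_pot E y) \<partial>lborel)"
    by (intro nn_integral_cong) (auto simp: indicator_def)
  also have "\<dots> = ennreal (LINT y:B|lborel. set_pot E y)"
    unfolding set_lebesgue_integral_def
    using set_integrable_subset_Icc[OF continuous_on_set_pot[OF E] B] B set_pot_nonneg[OF E]
    by (subst nn_integral_eq_integral) (auto simp: set_integrable_def indicator_def intro!: AE_I2)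
  finally show ?thesis .
qed

section \<open>Potentials of finite measures\<close>

lemma AE_mem_if_emeasure_Compl_eq_0:
  assumes "sets \<nu> = sets borel" "S \<in> sets borel" "emeasure \<nu> (UNIV - S) = 0"
  shows "AE y in \<nu>. y \<in> S"
proof -
  have "space \<nu> = UNIV" using sets_eq_imp_space_eq[OF assms(1)] by simp
  then show ?thesis by (intro AE_I'[of "UNIV - S"]) (use assms in auto)
qed

lemma ennreal_u_pot:
  assumes sets_eq: "sets \<nu> = sets borel" and "finite_measure \<nu>"
    and conc: "emeasure \<nu> (UNIV - {-pi..pi}) = 0" and x: "x \<in> {-pi..pi}"
  shows "ennreal (u_pot \<nu> x) = (\<integral>\<^sup>+ y. ennreal (G x y) \<partial>\<nu>)"
proof -
  interpret finite_measure \<nu> by fact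
  have AE: "AE y in \<nu>. y \<in> {-pi..pi}"
    using AE_mem_if_emeasure_Compl_eq_0[OF sets_eq _ conc] by simp
  have meas: "(\<lambda>y. G x y) \<in> borel_measurable \<nu>"
    unfolding measurable_cong_sets[OF sets_eq refl]
    by (rule borel_measurable_continuous_onI[OF continuous_on_G2])
  have "(\<integral>\<^sup>+ y. ennreal (G x y) \<partial>\<nu>) \<le> (\<integral>\<^sup>+ y. ennreal (pi / 2) \<partial>\<nu>)"
    by (rule nn_integral_mono_AE) (use AE in \<open>eventually_elim, use x G_le in \<open>auto intro: ennreal_leI\<close>\<close>)
  also have "\<dots> < top"
    by (simp add: emeasure_eq_measure ennreal_mult_less_top)
  finally have "(\<integral>\<^sup>+ y. ennreal (G x y) \<partial>\<nu>) \<noteq> top" by simp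
  moreover have "u_pot \<nu> x = enn2real (\<integral>\<^sup>+ y. ennreal (G x y) \<partial>\<nu>)"
    unfolding u_pot_def
    by (rule integral_eq_nn_integral[OF meas]) (use AE in \<open>eventually_elim, use x G_nonneg in auto\<close>)
  ultimately show ?thesis by (simp add: ennreal_enn2real_if)
qed

lemma set_integral_u_pot:
  assumes sets_eq: "sets \<nu> = sets borel" and fin: "finite_measure \<nu>"
    and conc: "emeasure \<nu> (UNIV - {-pi..pi}) = 0"
    and E: "E \<in> sets borel" "E \<subseteq> {-pi..pi}"
  shows "(LINT x:E|lborel. u_pot \<nu> x) = enn2real (\<integral>\<^sup>+ y. ennreal (set_pot E y) \<partial>\<nu>)"
proof -
  interpret finite_measure \<nu> by fact
  have AE: "AE y in \<nu>. y \<in> {-pi..pi}"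
    using AE_mem_if_emeasure_Compl_eq_0[OF sets_eq _ conc] by simp
  have [measurable]: "(\<lambda>(x, y). G x y) \<in> borel_measurable (lborel \<Otimes>\<^sub>M \<nu>)"
    by (rule G_measurable) (use sets_eq in auto)
  have [measurable]: "E \<in> sets lborel" using E by simp
  have u_meas: "u_pot \<nu> \<in> borel_measurable lborel"
    unfolding u_pot_def
    by (rule borel_measurable_lebesgue_integral) measurable
  have "0 \<le> u_pot \<nu> x" if "x \<in> {-pi..pi}" for x
    unfolding u_pot_def
    by (rule integral_nonneg_AE) (use AE in \<open>eventually_elim, use that G_nonneg in auto\<close>)
  then have "(LINT x:E|lborel. u_pot \<nu> x) = enn2real (\<integral>\<^sup>+ x. ennreal (indicator E x *\<^sub>R u_pot \<nu> x) \<partial>lborel)"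
    unfolding set_lebesgue_integral_def using u_meas E
    by (intro integral_eq_nn_integral) (auto simp: indicator_def intro!: AE_I2)
  also have "(\<integral>\<^sup>+ x. ennreal (indicator E x *\<^sub>R u_pot \<nu> x) \<partial>lborel)
      = (\<integral>\<^sup>+ x. (\<integral>\<^sup>+ y. ennreal (indicator E x * G x y) \<partial>\<nu>) \<partial>lborel)"
    using E by (intro nn_integral_cong) (auto simp: indicator_def ennreal_u_pot[OF sets_eq fin conc])
  also have "\<dots> = (\<integral>\<^sup>+ y. (\<integral>\<^sup>+ x. ennreal (indicator E x * G x y) \<partial>lborel) \<partial>\<nu>)"
    by (rule pair_sigma_finite.Fubini'[symmetric])
      (auto intro: pair_sigma_finite.intro lborel.sigma_finite_measure_axioms sigma_finite_measure_axioms)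
  also have "\<dots> = (\<integral>\<^sup>+ y. ennreal (set_pot E y) \<partial>\<nu>)"
    by (rule nn_integral_cong_AE) (use AE in \<open>eventually_elim, simp add: nn_integral_G_eq_set_pot[OF E]\<close>)
  finally show ?thesis .
qed

lemma nn_integral_set_pot_le:
  assumes sets_eq: "sets \<nu> = sets borel" and "finite_measure \<nu>"
    and conc: "emeasure \<nu> (UNIV - {-pi..pi}) = 0"
    and E: "E \<in> sets borel" "E \<subseteq> {-pi..pi}"
  shows "(\<integral>\<^sup>+ y. ennreal (set_pot E y) \<partial>\<nu>) \<le> ennreal (pi^2 * measure \<nu> UNIV)"
proof -
  interpret finite_measure \<nu> by fact
  have AE: "AE y in \<nu>. y \<in> {-pi..pi}"
    using AE_mem_if_emeasure_Compl_eq_0[OF sets_eq _ conc] by simp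
  have "set_pot E y \<le> pi^2" if "y \<in> {-pi..pi}" for y
  proof -
    have "set_pot E y \<le> measure lborel E * (pi / 2)" by (rule set_pot_le[OF E that])
    also have "\<dots> \<le> (2 * pi) * (pi / 2)"
      using measure_subset_Icc_le[OF E] by (intro mult_right_mono) auto
    finally show ?thesis by (simp add: power2_eq_square)
  qed
  then have "(\<integral>\<^sup>+ y. ennreal (set_pot E y) \<partial>\<nu>) \<le> (\<integral>\<^sup>+ y. ennreal (pi^2) \<partial>\<nu>)"
    by (intro nn_integral_mono_AE) (use AE in \<open>eventually_elim, auto intro: ennreal_leI\<close>)
  also have "\<dots> = ennreal (pi^2 * measure \<nu> UNIV)"
    using emeasure_eq_measure[of UNIV] sets_eq_imp_space_eq[OF sets_eq] by (simp add: ennreal_mult)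
  finally show ?thesis .
qed

lemma set_integral_u_pot_le:
  assumes "sets \<nu> = sets borel" "finite_measure \<nu>" "emeasure \<nu> (UNIV - {-pi..pi}) = 0"
    and "E \<in> sets borel" "E \<subseteq> {-pi..pi}"
  shows "(LINT x:E|lborel. u_pot \<nu> x) \<le> pi^2 * measure \<nu> UNIV"
proof -
  have "(LINT x:E|lborel. u_pot \<nu> x) \<le> enn2real (ennreal (pi^2 * measure \<nu> UNIV))"
    unfolding set_integral_u_pot[OF assms] by (intro enn2real_mono nn_integral_set_pot_le[OF assms]) simp
  then show ?thesis by simp
qed

lemma nn_integral_set_pot_le_mass:
  assumes sets_K: "sets K = sets borel" and K_conc: "emeasure K (UNIV - {-pi<..<pi}) = 0"
    and E: "E \<in> sets borel" "E \<subseteq> {-pi..pi}"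
  defines "t \<equiv> measure lborel E"
  shows "(\<integral>\<^sup>+ y. ennreal (set_pot E y) \<partial>K) \<le> ennreal (set_pot {-t/2..t/2} 0) * emeasure K {-pi<..<pi}"
proof -
  have "AE y in K. y \<in> {-pi<..<pi}"
    using AE_mem_if_emeasure_Compl_eq_0[OF sets_K _ K_conc] by simp
  then have "AE y in K. ennreal (set_pot E y) \<le> ennreal (set_pot {-t/2..t/2} 0) * indicator {-pi<..<pi} y"
    by eventually_elim (use set_pot_le_centered[OF E] in \<open>auto intro: ennreal_leI simp: t_def\<close>)
  then have "(\<integral>\<^sup>+ y. ennreal (set_pot E y) \<partial>K) \<le> (\<integral>\<^sup>+ y. ennreal (set_pot {-t/2..t/2} 0) * indicator {-pi<..<pi} y \<partial>K)"
    by (rule nn_integral_mono_AE)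
  also have "\<dots> = ennreal (set_pot {-t/2..t/2} 0) * emeasure K {-pi<..<pi}"
    using sets_K by (subst nn_integral_cmult_indicator) auto
  finally show ?thesis .
qed

section \<open>Level sets and the symmetric decreasing rearrangement\<close>

lemma nn_integral_layer_cake:
  fixes \<phi> :: "real \<Rightarrow> real" and w :: "real \<Rightarrow> ennreal" and R :: "real \<Rightarrow> real \<Rightarrow> bool"
  assumes [measurable]: "w \<in> borel_measurable borel" "Measurable.pred (lborel \<Otimes>\<^sub>M lborel) (\<lambda>(y, s). R s (\<phi> y))"
    and length: "\<And>r. (\<integral>\<^sup>+ s. indicator {s. 0 < s \<and> R s r} s \<partial>lborel) = ennreal r"
  shows "(\<integral>\<^sup>+ y. ennreal (\<phi> y) * w y \<partial>lborel)
     = (\<integral>\<^sup>+ s. indicator {0<..} s * (\<integral>\<^sup>+ y. indicator {y. R s (\<phi> y)} y * w y \<partial>lborel) \<partial>lborel)"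
proof -
  define h where "h y s = indicator {s. 0 < s \<and> R s (\<phi> y)} s * w y" for y s :: real
  have [measurable]: "w \<in> borel_measurable lborel" by simp
  have "(\<lambda>(y, s). h y s) \<in> borel_measurable (lborel \<Otimes>\<^sub>M lborel)"
    unfolding h_def indicator_def by measurable
  then have "(\<integral>\<^sup>+ y. (\<integral>\<^sup>+ s. h y s \<partial>lborel) \<partial>lborel) = (\<integral>\<^sup>+ s. (\<integral>\<^sup>+ y. h y s \<partial>lborel) \<partial>lborel)"
    by (rule lborel_pair.Fubini'[symmetric])
  moreover have "(\<integral>\<^sup>+ s. h y s \<partial>lborel) = ennreal (\<phi> y) * w y" for y
    unfolding h_def by (simp add: nn_integral_multc length)
  moreover have "(\<integral>\<^sup>+ y. h y s \<partial>lborel) = indicator {0<..} s * (\<integral>\<^sup>+ y. indicator {y. R s (\<phi> y)} y * w y \<partial>lborel)" for s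
    unfolding h_def by (auto simp: indicator_def)
  ultimately show ?thesis by simp
qed

lemma nn_integral_layer_cake_less:
  fixes \<phi> :: "real \<Rightarrow> real" and w :: "real \<Rightarrow> ennreal"
  assumes [measurable]: "\<phi> \<in> borel_measurable borel" "w \<in> borel_measurable borel"
  shows "(\<integral>\<^sup>+ y. ennreal (\<phi> y) * w y \<partial>lborel)
     = (\<integral>\<^sup>+ s. indicator {0<..} s * (\<integral>\<^sup>+ y. indicator {y. s < \<phi> y} y * w y \<partial>lborel) \<partial>lborel)"
proof (rule nn_integral_layer_cake)
  fix r :: real
  show "(\<integral>\<^sup>+ s. indicator {s. 0 < s \<and> s < r} s \<partial>lborel) = ennreal r"
  proof -
    have "{s. 0 < s \<and> s < r} = {0<..<r}" by auto
    then show ?thesis by (cases "0 \<le> r") (auto simp: ennreal_neg)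
  qed
qed measurable

lemma nn_integral_layer_cake_le:
  fixes \<phi> :: "real \<Rightarrow> real" and w :: "real \<Rightarrow> ennreal"
  assumes [measurable]: "\<phi> \<in> borel_measurable borel" "w \<in> borel_measurable borel"
  shows "(\<integral>\<^sup>+ y. ennreal (\<phi> y) * w y \<partial>lborel)
     = (\<integral>\<^sup>+ s. indicator {0<..} s * (\<integral>\<^sup>+ y. indicator {y. s \<le> \<phi> y} y * w y \<partial>lborel) \<partial>lborel)"
proof (rule nn_integral_layer_cake)
  fix r :: real
  show "(\<integral>\<^sup>+ s. indicator {s. 0 < s \<and> s \<le> r} s \<partial>lborel) = ennreal r"
  proof -
    have "{s. 0 < s \<and> s \<le> r} = {0<..r}" by auto
    then show ?thesis by (cases "0 \<le> r") (auto simp: ennreal_neg)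
  qed
qed measurable

definition level_measure :: "(real \<Rightarrow> real) \<Rightarrow> real \<Rightarrow> real" where
  "level_measure f s = measure lborel {x \<in> {-pi..pi}. s < f x}"

definition sym_density :: "(real \<Rightarrow> real) \<Rightarrow> real \<Rightarrow> real" where
  "sym_density f y = indicator {-pi<..<pi} y * sym_rearr f y"

lemma decr_rearr_eq_Inf:
  "0 < \<tau> \<Longrightarrow> \<tau> < 2 * pi \<Longrightarrow> decr_rearr f \<tau> = Inf {s. level_measure f s \<le> \<tau>}"
  unfolding decr_rearr_def level_measure_def by auto

lemma sym_density_outside: "y \<notin> {-pi<..<pi} \<Longrightarrow> sym_density f y = 0"
  unfolding sym_density_def by simp

locale symmetrization =
  fixes f :: "real \<Rightarrow> real"
  assumes f_meas[measurable]: "f \<in> borel_measurable borel"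
    and f_nonneg: "\<And>x. 0 \<le> f x"
    and f_int: "set_integrable lborel {-pi..pi} f"
begin

lemma level_measure_le: "level_measure f s \<le> 2 * pi"
  unfolding level_measure_def by (rule order_trans[OF measure_subset_Icc_le]) auto

lemma level_measure_antimono: "s \<le> s' \<Longrightarrow> level_measure f s' \<le> level_measure f s"
  unfolding level_measure_def
  by (rule measure_mono_fmeasurable) (auto intro: fmeasurable_subset_Icc)

lemma level_measure_neg: "s < 0 \<Longrightarrow> level_measure f s = 2 * pi"
proof -
  assume "s < 0"
  then have "{x \<in> {-pi..pi}. s < f x} = {-pi..pi}" using f_nonneg by (auto intro: less_le_trans)
  then show ?thesis unfolding level_measure_def by simp
qed

lemma level_measure_Markov: "0 < s \<Longrightarrow> level_measure f s \<le> (LINT x:{-pi..pi}|lborel. f x) / s"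
proof -
  assume s: "0 < s"
  have "level_measure f s \<le> measure lborel {x \<in> {-pi..pi}. s \<le> f x}"
    unfolding level_measure_def
    by (rule measure_mono_fmeasurable) (auto intro: fmeasurable_subset_Icc)
  also have "\<dots> \<le> (LINT x:{-pi..pi}|lborel. f x) / s"
    by (rule integral_Markov_inequality'_measure[OF f_int]) (use s f_nonneg in auto)
  finally show ?thesis .
qed

lemma level_measure_le_ex: "0 < \<tau> \<Longrightarrow> \<exists>s. level_measure f s \<le> \<tau>"
proof -
  assume \<tau>: "0 < \<tau>"
  define I where "I = (LINT x:{-pi..pi}|lborel. f x)"
  have "0 \<le> I"
    unfolding I_def set_lebesgue_integral_def by (rule integral_nonneg_AE) (auto simp: f_nonneg)
  then have pos: "0 < I / \<tau> + 1" and "I \<le> \<tau> * (I / \<tau> + 1)"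
    using \<tau> by (auto simp: field_simps add_nonneg_pos)
  then have "I / (I / \<tau> + 1) \<le> \<tau>" by (simp add: divide_le_eq)
  then have "level_measure f (I / \<tau> + 1) \<le> \<tau>"
    using level_measure_Markov[OF pos] unfolding I_def by linarith
  then show ?thesis ..
qed

lemma decr_rearr_ge: "0 < \<tau> \<Longrightarrow> \<tau> < level_measure f s \<Longrightarrow> s \<le> decr_rearr f \<tau>"
proof -
  assume \<tau>: "0 < \<tau>" "\<tau> < level_measure f s"
  have "s \<le> s'" if "level_measure f s' \<le> \<tau>" for s'
    using level_measure_antimono[of s' s] that \<tau> by fastforce
  then have "s \<le> Inf {s. level_measure f s \<le> \<tau>}"
    using level_measure_le_ex[OF \<tau>(1)] by (intro cInf_greatest) auto
  then show ?thesis
    using \<tau> level_measure_le[of s] by (simp add: decr_rearr_eq_Inf)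
qed

lemma bdd_below_level_measure_le: "\<tau> < 2 * pi \<Longrightarrow> bdd_below {s. level_measure f s \<le> \<tau>}"
  using level_measure_neg by (intro bdd_belowI[of _ 0]) (metis linorder_not_le mem_Collect_eq)

lemma decr_rearr_le: "0 < \<tau> \<Longrightarrow> \<tau> < 2 * pi \<Longrightarrow> level_measure f s \<le> \<tau> \<Longrightarrow> decr_rearr f \<tau> \<le> s"
  by (simp add: decr_rearr_eq_Inf cInf_lower bdd_below_level_measure_le)

lemma decr_rearr_antimono:
  assumes "0 < \<tau>1" "\<tau>1 \<le> \<tau>2" "\<tau>2 < 2 * pi"
  shows "decr_rearr f \<tau>2 \<le> decr_rearr f \<tau>1"
proof -
  have "Inf {s. level_measure f s \<le> \<tau>2} \<le> Inf {s. level_measure f s \<le> \<tau>1}"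
    using assms level_measure_le_ex[of \<tau>1] bdd_below_level_measure_le[of \<tau>2]
    by (intro cInf_superset_mono) auto
  then show ?thesis using assms by (simp add: decr_rearr_eq_Inf)
qed

lemma sym_density_ge:
  "y \<in> {-pi<..<pi} - {0} \<Longrightarrow> 2 * \<bar>y\<bar> < level_measure f s \<Longrightarrow> s \<le> sym_density f y"
  unfolding sym_density_def sym_rearr_def by (auto intro: decr_rearr_ge)

lemma sym_density_le:
  "y \<in> {-pi<..<pi} - {0} \<Longrightarrow> level_measure f s \<le> 2 * \<bar>y\<bar> \<Longrightarrow> sym_density f y \<le> s"
  unfolding sym_density_def sym_rearr_def by (auto intro: decr_rearr_le)

lemma sym_density_measurable[measurable]: "sym_density f \<in> borel_measurable borel"
proof -
  have "mono_on {0<..<2 * pi} (\<lambda>\<tau>. - decr_rearr f \<tau>)"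
    by (rule mono_onI) (auto intro: decr_rearr_antimono)
  then have "(\<lambda>\<tau>. - (- decr_rearr f \<tau>)) \<in> borel_measurable (restrict_space borel {0<..<2 * pi})"
    by (intro borel_measurable_uminus borel_measurable_mono_on_fnc)
  moreover have "(\<lambda>y. 2 * \<bar>y\<bar>) \<in> restrict_space borel ({-pi<..<pi} - {0}) \<rightarrow>\<^sub>M restrict_space borel {0<..<2 * pi}"
    by (rule measurable_restrict_space3) auto
  ultimately have "(\<lambda>y. decr_rearr f (2 * \<bar>y\<bar>)) \<in> borel_measurable (restrict_space borel ({-pi<..<pi} - {0}))"
    using measurable_comp by (fastforce simp: comp_def)
  then have [measurable]: "(\<lambda>y. indicator ({-pi<..<pi} - {0}) y * decr_rearr f (2 * \<bar>y\<bar>)) \<in> borel_measurable borel"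
    by (subst (asm) borel_measurable_restrict_space_iff) auto
  have "sym_density f = (\<lambda>y. indicator ({-pi<..<pi} - {0}) y * decr_rearr f (2 * \<bar>y\<bar>)
      + indicator {0} y * decr_rearr f 0)"
    by (auto simp: fun_eq_iff sym_density_def sym_rearr_def indicator_def)
  also have "\<dots> \<in> borel_measurable borel" by measurable
  finally show ?thesis .
qed

lemma level_measure_eq_open: "measure lborel {y \<in> {-pi<..<pi}. s < f y} = level_measure f s"
proof -
  define A N where "A = {y \<in> {-pi<..<pi}. s < f y}" "N = {x \<in> {-pi..pi}. s < f x} - {-pi<..<pi}"
  have "A \<in> sets lborel" unfolding A_N_def by measurable
  moreover have "N \<in> null_sets lborel"
    unfolding A_N_def
    by (rule countable_imp_null_set_lborel) (auto intro: countable_subset[of _ "{-pi, pi}"])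
  ultimately have "measure lborel (A \<union> N) = measure lborel A" by (rule measure_Un_null_set)
  moreover have "A \<union> N = {x \<in> {-pi..pi}. s < f x}" unfolding A_N_def by auto
  ultimately show ?thesis unfolding level_measure_def A_N_def by simp
qed

lemma nn_integral_level_set_pot_le:
  assumes "0 < s" and E: "E \<in> sets borel" "E \<subseteq> {-pi..pi}"
  defines "t \<equiv> measure lborel E"
  shows "(\<integral>\<^sup>+ y. indicator {y. s < indicator {-pi<..<pi} y * f y} y * ennreal (set_pot E y) \<partial>lborel)
    \<le> (\<integral>\<^sup>+ y. indicator {y. s \<le> sym_density f y} y * ennreal (set_pot {-t/2..t/2} y) \<partial>lborel)"
    (is "?L \<le> ?R")
proof -
  (* The level set A = {f > s} is replaced by the centred interval of the same length, which up to
     the null set {-a/2, 0, a/2} lies in the level set {f^# >= s}. *)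
  define A where "A = {y \<in> {-pi<..<pi}. s < f y}"
  define a where "a = measure lborel A"
  have A: "A \<in> sets borel" "A \<subseteq> {-pi..pi}" unfolding A_def by auto
  have "a = level_measure f s" unfolding a_def A_def by (rule level_measure_eq_open)
  then have a: "a = level_measure f s" "0 \<le> a" "a \<le> 2 * pi"
    using level_measure_le[of s] measure_nonneg[of lborel A] by (auto simp: a_def)
  have I: "{-t/2..t/2} \<in> sets borel" "{-t/2..t/2} \<subseteq> {-pi..pi}"
    using measure_subset_Icc_le[OF E] by (auto simp: t_def)
  have K: "{-a/2..a/2} \<in> sets borel" "{-a/2..a/2} \<subseteq> {-pi..pi}" using a by auto
  have "?L = ennreal (LINT y:A|lborel. set_pot E y)"
  proof -
    have "{y. s < indicator {-pi<..<pi} y * f y} = A"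
      using \<open>0 < s\<close> by (auto simp: A_def indicator_def)
    then show ?thesis using nn_integral_indicator_set_pot[OF A E] by simp
  qed
  also have "\<dots> \<le> ennreal (LINT y:{-a/2..a/2}|lborel. set_pot {-t/2..t/2} y)"
    using set_integral_set_pot_le_centered[OF A E] unfolding a_def t_def by (rule ennreal_leI)
  also have "\<dots> = (\<integral>\<^sup>+ y. indicator {-a/2..a/2} y * ennreal (set_pot {-t/2..t/2} y) \<partial>lborel)"
    by (rule nn_integral_indicator_set_pot[OF K I, symmetric])
  also have "\<dots> = (\<integral>\<^sup>+ y. indicator ({-a/2<..<a/2} - {0}) y * ennreal (set_pot {-t/2..t/2} y) \<partial>lborel)"
  proof (rule nn_integral_cong_AE)
    have "AE y in lborel. y \<noteq> -a/2" "AE y in lborel. y \<noteq> a/2" "AE y in lborel. y \<noteq> 0"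
      by (rule AE_lborel_singleton)+
    then show "AE y in lborel. indicator {-a/2..a/2} y * ennreal (set_pot {-t/2..t/2} y)
        = indicator ({-a/2<..<a/2} - {0}) y * ennreal (set_pot {-t/2..t/2} y)"
      by eventually_elim (auto simp: indicator_def)
  qed
  also have "\<dots> \<le> ?R"
    using a sym_density_ge[of _ s] by (intro nn_integral_mono) (auto simp: indicator_def)
  finally show ?thesis .
qed

lemma nn_integral_density_set_pot_le:
  assumes f_outside: "AE y in lborel. y \<notin> {-pi<..<pi} \<longrightarrow> f y = 0"
    and E: "E \<in> sets borel" "E \<subseteq> {-pi..pi}"
  defines "t \<equiv> measure lborel E"
  shows "(\<integral>\<^sup>+ y. ennreal (f y) * ennreal (set_pot E y) \<partial>lborel)
     \<le> (\<integral>\<^sup>+ y. ennreal (sym_density f y) * ennreal (set_pot {-t/2..t/2} y) \<partial>lborel)"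
proof -
  have "{-t/2..t/2} \<in> sets borel" "{-t/2..t/2} \<subseteq> {-pi..pi}"
    using measure_subset_Icc_le[OF E] by (auto simp: t_def)
  note [measurable] = set_pot_measurable[OF E] set_pot_measurable[OF this]
  have "(\<integral>\<^sup>+ y. ennreal (f y) * ennreal (set_pot E y) \<partial>lborel)
      = (\<integral>\<^sup>+ y. ennreal (indicator {-pi<..<pi} y * f y) * ennreal (set_pot E y) \<partial>lborel)"
    by (rule nn_integral_cong_AE) (use f_outside in \<open>eventually_elim, auto simp: indicator_def\<close>)
  also have "\<dots> = (\<integral>\<^sup>+ s. indicator {0<..} s * (\<integral>\<^sup>+ y. indicator {y. s < indicator {-pi<..<pi} y * f y} y
      * ennreal (set_pot E y) \<partial>lborel) \<partial>lborel)"
    by (rule nn_integral_layer_cake_less) measurable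
  also have "\<dots> \<le> (\<integral>\<^sup>+ s. indicator {0<..} s * (\<integral>\<^sup>+ y. indicator {y. s \<le> sym_density f y} y
      * ennreal (set_pot {-t/2..t/2} y) \<partial>lborel) \<partial>lborel)"
    using nn_integral_level_set_pot_le[OF _ E]
    by (intro nn_integral_mono) (auto simp: indicator_def t_def)
  also have "\<dots> = (\<integral>\<^sup>+ y. ennreal (sym_density f y) * ennreal (set_pot {-t/2..t/2} y) \<partial>lborel)"
    by (rule nn_integral_layer_cake_le[symmetric]) measurable
  finally show ?thesis .
qed

lemma emeasure_sym_density_gt_le:
  assumes "0 < s"
  shows "emeasure lborel {y. s < sym_density f y} \<le> ennreal (level_measure f s)"
proof -
  define m where "m = level_measure f s"
  have "{y. s < sym_density f y} \<subseteq> {-m/2<..<m/2} \<union> {0}"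
  proof
    fix y assume y: "y \<in> {y. s < sym_density f y}"
    show "y \<in> {-m/2<..<m/2} \<union> {0}"
    proof (cases "y \<in> {-pi<..<pi} - {0}")
      case True
      then show ?thesis using sym_density_le[OF True, of s] y by (force simp: m_def)
    next
      case False
      then show ?thesis using y sym_density_outside[of y f] \<open>0 < s\<close> by auto
    qed
  qed
  then have "emeasure lborel {y. s < sym_density f y} \<le> emeasure lborel ({-m/2<..<m/2} \<union> {0})"
    by (intro emeasure_mono) auto
  also have "\<dots> = emeasure lborel {-m/2<..<m/2}"
    by (rule emeasure_Un_null_set) auto
  also have "\<dots> = ennreal m"
    using measure_nonneg[of lborel "{x \<in> {-pi..pi}. s < f x}"] by (simp add: m_def level_measure_def)
  finally show ?thesis unfolding m_def .
qed

lemma nn_integral_sym_density_finite: "(\<integral>\<^sup>+ y. ennreal (sym_density f y) \<partial>lborel) < \<infinity>"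
proof -
  have "(\<integral>\<^sup>+ y. ennreal (sym_density f y) \<partial>lborel)
      = (\<integral>\<^sup>+ s. indicator {0<..} s * emeasure lborel {y. s < sym_density f y} \<partial>lborel)"
    using nn_integral_layer_cake_less[of "sym_density f" "\<lambda>_. 1"] by simp
  also have "\<dots> \<le> (\<integral>\<^sup>+ s. indicator {0<..} s * emeasure lborel {y. s < indicator {-pi..pi} y * f y} \<partial>lborel)"
  proof (intro nn_integral_mono)
    fix s :: real
    have "emeasure lborel {y. s < sym_density f y} \<le> emeasure lborel {y. s < indicator {-pi..pi} y * f y}"
      if "0 < s"
    proof -
      have "{y. s < indicator {-pi..pi} y * f y} = {x \<in> {-pi..pi}. s < f x}"
        using that by (auto simp: indicator_def)
      moreover have "{x \<in> {-pi..pi}. s < f x} \<in> fmeasurable lborel"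
        by (rule fmeasurable_subset_Icc) auto
      ultimately show ?thesis
        using emeasure_sym_density_gt_le[OF that] by (simp add: level_measure_def emeasure_eq_measure2)
    qed
    then show "indicator {0<..} s * emeasure lborel {y. s < sym_density f y}
        \<le> indicator {0<..} s * emeasure lborel {y. s < indicator {-pi..pi} y * f y}"
      by (cases "0 < s") auto
  qed
  also have "\<dots> = (\<integral>\<^sup>+ y. ennreal (indicator {-pi..pi} y * f y) \<partial>lborel)"
    using nn_integral_layer_cake_less[of "\<lambda>y. indicator {-pi..pi} y * f y" "\<lambda>_. 1"] by simp
  also have "\<dots> = ennreal (LINT x:{-pi..pi}|lborel. f x)"
    using f_int f_nonneg unfolding set_lebesgue_integral_def set_integrable_def
    by (subst nn_integral_eq_integral) auto
  finally show ?thesis by (simp add: order_le_less_trans)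
qed

end

section \<open>The symmetrized measure\<close>

lemma nn_integral_sum_measures:
  fixes N :: "'i \<Rightarrow> 'a measure"
  assumes sets_N: "\<And>i. i \<in> I \<Longrightarrow> sets (N i) = sets M"
    and emeasure_M: "\<And>A. A \<in> sets M \<Longrightarrow> emeasure M A = (\<Sum>i\<in>I. emeasure (N i) A)"
    and "g \<in> borel_measurable M"
  shows "integral\<^sup>N M g = (\<Sum>i\<in>I. integral\<^sup>N (N i) g)"
  using \<open>g \<in> borel_measurable M\<close>
proof (induction rule: borel_measurable_induct)
  have meas: "u \<in> borel_measurable (N i)" if "u \<in> borel_measurable M" "i \<in> I" for u :: "'a \<Rightarrow> ennreal" and i
    using that measurable_cong_sets[OF sets_N refl] by blast
  have space: "space (N i) = space M" if "i \<in> I" for i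
    using sets_eq_imp_space_eq[OF sets_N[OF that]] .
  {
    case (cong f g)
    have eq: "integral\<^sup>N K f = integral\<^sup>N K g" if "space K = space M" for K
      by (intro nn_integral_cong) (simp add: that cong(3))
    then have "(\<Sum>i\<in>I. integral\<^sup>N (N i) f) = (\<Sum>i\<in>I. integral\<^sup>N (N i) g)"
      using space by (intro sum.cong) auto
    then show ?case using eq[of M] cong(4) by simp
  next
    case (set A)
    then show ?case using sets_N emeasure_M by (simp add: nn_integral_indicator)
  next
    case (mult u c)
    then show ?case by (simp add: nn_integral_cmult meas sum_distrib_left)
  next
    case (add u v)
    then show ?case by (simp add: nn_integral_add meas sum.distrib)
  next
    case (seq U)
    have "(SUP i. U i) = (\<lambda>x. SUP i. U i x)" by (rule ext) (simp only: SUP_apply)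
    then have SUP_eq: "integral\<^sup>N K (SUP i. U i) = (SUP j. integral\<^sup>N K (U j))"
      if "\<And>i. U i \<in> borel_measurable K" for K
      using nn_integral_monotone_convergence_SUP[OF \<open>incseq U\<close> that] by simp
    have inc: "incseq (\<lambda>j. integral\<^sup>N K (U j))" for K
      using \<open>incseq U\<close> by (auto simp: incseq_def le_fun_def intro!: nn_integral_mono)
    have "integral\<^sup>N M (SUP i. U i) = (SUP j. integral\<^sup>N M (U j))"
      using seq.hyps(1) by (rule SUP_eq)
    also have "\<dots> = (SUP j. \<Sum>i\<in>I. integral\<^sup>N (N i) (U j))"
      by (simp only: seq.IH)
    also have "\<dots> = (\<Sum>i\<in>I. SUP j. integral\<^sup>N (N i) (U j))"
      using inc by (rule ennreal_SUP_sum)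
    also have "\<dots> = (\<Sum>i\<in>I. integral\<^sup>N (N i) (SUP i. U i))"
    proof (rule sum.cong[OF refl])
      fix i assume "i \<in> I"
      then show "(SUP j. integral\<^sup>N (N i) (U j)) = integral\<^sup>N (N i) (SUP i. U i)"
        using SUP_eq[of "N i"] meas[OF seq.hyps(1)] by simp
    qed
    finally show ?case .
  }
qed

lemma sets_sym_measure [measurable_cong]: "sets (sym_measure f M) = sets borel"
proof -
  have "sigma_algebra UNIV (sets (borel :: real measure))"
    using sets.sigma_algebra_axioms[of "borel :: real measure"] by simp
  then show ?thesis unfolding sym_measure_def by (rule sigma_algebra.sets_measure_of_eq)
qed

context symmetrization
begin

lemma emeasure_sym_measure:
  assumes A: "A \<in> sets borel"
  shows "emeasure (sym_measure f M) A = emeasure (density lborel (\<lambda>x. ennreal (sym_density f x))) A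
      + emeasure (density (return borel 0) (\<lambda>_. ennreal M)) A"
proof -
  define N1 where "N1 = density lborel (\<lambda>x. ennreal (sym_density f x))"
  define N2 where "N2 = density (return borel (0::real)) (\<lambda>_. ennreal M)"
  define \<mu> where "\<mu> B = (\<integral>\<^sup>+x. ennreal (indicator {-pi<..<pi} x * sym_rearr f x) * indicator B x \<partial>lborel)
    + ennreal M * indicator B (0::real)" for B
  have sets_N: "sets N1 = sets borel" "sets N2 = sets borel" unfolding N1_def N2_def by auto
  have \<mu>_eq: "\<mu> B = emeasure N1 B + emeasure N2 B" if B: "B \<in> sets borel" for B
  proof -
    have "emeasure N1 B = (\<integral>\<^sup>+x. ennreal (sym_density f x) * indicator B x \<partial>lborel)"
      unfolding N1_def using B by (subst emeasure_density) auto
    moreover have "emeasure N2 B = ennreal M * indicator B (0::real)"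
      unfolding N2_def using B by (subst emeasure_density_const) auto
    ultimately show ?thesis unfolding \<mu>_def sym_density_def by simp
  qed
  have "countably_additive (sets borel) \<mu>"
    unfolding countably_additive_def
  proof (intro allI impI)
    fix F :: "nat \<Rightarrow> real set"
    assume F: "range F \<subseteq> sets borel" "disjoint_family F" "\<Union> (range F) \<in> sets borel"
    have "(\<Sum>i. \<mu> (F i)) = (\<Sum>i. emeasure N1 (F i)) + (\<Sum>i. emeasure N2 (F i))"
      using F \<mu>_eq by (auto simp: suminf_add)
    also have "\<dots> = \<mu> (\<Union> (range F))"
      using F sets_N \<mu>_eq by (simp add: suminf_emeasure)
    finally show "(\<Sum>i. \<mu> (F i)) = \<mu> (\<Union> (range F))" .
  qed
  moreover have "sigma_algebra UNIV (sets (borel :: real measure))"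
    using sets.sigma_algebra_axioms[of "borel :: real measure"] by simp
  moreover have "positive (sets borel) \<mu>" unfolding positive_def \<mu>_def by simp
  ultimately have "emeasure (sym_measure f M) A = \<mu> A"
    unfolding sym_measure_def \<mu>_def[abs_def] using emeasure_measure_of_sigma A by blast
  then show ?thesis using \<mu>_eq[OF A] unfolding N1_def N2_def by simp
qed

lemma nn_integral_sym_measure:
  assumes g: "g \<in> borel_measurable borel"
  shows "integral\<^sup>N (sym_measure f M) g = (\<integral>\<^sup>+x. ennreal (sym_density f x) * g x \<partial>lborel) + ennreal M * g 0"
proof -
  define N where "N b = (if b then density lborel (\<lambda>x. ennreal (sym_density f x))
    else density (return borel 0) (\<lambda>_. ennreal M))" for b
  have "integral\<^sup>N (sym_measure f M) g = (\<Sum>b\<in>UNIV. integral\<^sup>N (N b) g)"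
    using g by (intro nn_integral_sum_measures)
      (auto simp: N_def UNIV_bool emeasure_sym_measure sets_sym_measure add.commute)
  also have "\<dots> = (\<integral>\<^sup>+x. ennreal (sym_density f x) * g x \<partial>lborel) + ennreal M * g 0"
    using g by (simp add: N_def UNIV_bool nn_integral_density nn_integral_return)
  finally show ?thesis .
qed

lemma finite_measure_sym_measure: "finite_measure (sym_measure f M)"
proof (rule finite_measureI)
  have "emeasure (sym_measure f M) (space (sym_measure f M)) = integral\<^sup>N (sym_measure f M) (\<lambda>_. 1)"
    by simp
  also have "\<dots> = (\<integral>\<^sup>+x. ennreal (sym_density f x) \<partial>lborel) + ennreal M"
    by (simp add: nn_integral_sym_measure del: nn_integral_const)
  also have "\<dots> < \<infinity>" using nn_integral_sym_density_finite by simp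
  finally show "emeasure (sym_measure f M) (space (sym_measure f M)) \<noteq> \<infinity>" by simp
qed

lemma sym_measure_concentrated: "emeasure (sym_measure f M) (UNIV - {-pi..pi}) = 0"
proof -
  have "UNIV - {-pi..pi} \<in> sets (sym_measure f M)" by (simp add: sets_sym_measure)
  then have "emeasure (sym_measure f M) (UNIV - {-pi..pi})
      = (\<integral>\<^sup>+x. ennreal (sym_density f x) * indicator (UNIV - {-pi..pi}) x \<partial>lborel)"
    using nn_integral_sym_measure[of "indicator (UNIV - {-pi..pi})" M]
    by (simp add: nn_integral_indicator[symmetric] del: nn_integral_indicator)
  also have "(\<lambda>x. ennreal (sym_density f x) * indicator (UNIV - {-pi..pi}) x) = (\<lambda>_. 0)"
  proof
    fix x
    show "ennreal (sym_density f x) * indicator (UNIV - {-pi..pi}) x = 0"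
      by (cases "x \<in> {-pi..pi}") (auto simp: sym_density_outside)
  qed
  finally show ?thesis by simp
qed

end

section \<open>Comparison of the star functions\<close>

lemma star_fun_le_centered:
  assumes t: "t \<in> {0..2*pi}"
    and le: "\<And>E. E \<in> sets borel \<Longrightarrow> E \<subseteq> {-pi..pi} \<Longrightarrow>
      (LINT x:E|lborel. g x) \<le> (LINT x:{-measure lborel E/2..measure lborel E/2}|lborel. h x)"
    and bdd: "\<And>E. E \<in> sets borel \<Longrightarrow> E \<subseteq> {-pi..pi} \<Longrightarrow> (LINT x:E|lborel. h x) \<le> C"
  shows "star_fun g t \<le> star_fun h t"
proof -
  have I: "{-t/2..t/2} \<in> sets borel" "{-t/2..t/2} \<subseteq> {-pi..pi}" "measure lborel {-t/2..t/2} = t"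
    using t by auto
  have "{-pi..-pi+t} \<in> sets borel" "{-pi..-pi+t} \<subseteq> {-pi..pi}" "measure lborel {-pi..-pi+t} = t"
    using t by auto
  then have "{(LINT x:E|lborel. g x) | E. E \<in> sets borel \<and> E \<subseteq> {-pi..pi} \<and> measure lborel E = t} \<noteq> {}"
    by blast
  then have "star_fun g t \<le> (LINT x:{-t/2..t/2}|lborel. h x)"
    unfolding star_fun_def
  proof (rule cSup_least)
    fix v assume "v \<in> {(LINT x:E|lborel. g x) | E. E \<in> sets borel \<and> E \<subseteq> {-pi..pi} \<and> measure lborel E = t}"
    then obtain E where "E \<in> sets borel" "E \<subseteq> {-pi..pi}" "measure lborel E = t" "v = (LINT x:E|lborel. g x)"
      by blast
    then show "v \<le> (LINT x:{-t/2..t/2}|lborel. h x)" using le by blast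
  qed
  also have "\<dots> \<le> star_fun h t"
    unfolding star_fun_def
  proof (rule cSup_upper)
    show "(LINT x:{-t/2..t/2}|lborel. h x)
        \<in> {(LINT x:E|lborel. h x) | E. E \<in> sets borel \<and> E \<subseteq> {-pi..pi} \<and> measure lborel E = t}"
      using I by blast
    show "bdd_above {(LINT x:E|lborel. h x) | E. E \<in> sets borel \<and> E \<subseteq> {-pi..pi} \<and> measure lborel E = t}"
      by (rule bdd_aboveI[of _ C]) (auto intro: bdd)
  qed
  finally show ?thesis .
qed

locale lebesgue_decomposition = symmetrization f for f +
  fixes \<mu> \<sigma> \<delta> :: "real measure"
  assumes sets_\<mu>: "sets \<mu> = sets borel" and sets_\<sigma>: "sets \<sigma> = sets borel"
    and sets_\<delta>: "sets \<delta> = sets borel" and finite_\<mu>: "finite_measure \<mu>"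
    and supp_\<mu>: "emeasure \<mu> (UNIV - {-pi<..<pi}) = 0"
    and decomp: "\<And>A. A \<in> sets borel \<Longrightarrow>
      emeasure \<mu> A = (\<integral>\<^sup>+x. ennreal (f x) * indicator A x \<partial>lborel) + emeasure \<sigma> A + emeasure \<delta> A"
begin

abbreviation singular_mass :: real where
  "singular_mass \<equiv> measure \<sigma> {-pi<..<pi} + measure \<delta> {-pi<..<pi}"

lemma f_outside: "AE y in lborel. y \<notin> {-pi<..<pi} \<longrightarrow> f y = 0"
  and \<sigma>_outside: "emeasure \<sigma> (UNIV - {-pi<..<pi}) = 0"
  and \<delta>_outside: "emeasure \<delta> (UNIV - {-pi<..<pi}) = 0"
proof -
  have "(\<integral>\<^sup>+x. ennreal (f x) * indicator (UNIV - {-pi<..<pi}) x \<partial>lborel) = 0"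
    and "emeasure \<sigma> (UNIV - {-pi<..<pi}) = 0" "emeasure \<delta> (UNIV - {-pi<..<pi}) = 0"
    using decomp[of "UNIV - {-pi<..<pi}"] supp_\<mu> by auto
  moreover from this(1) have "AE y in lborel. ennreal (f y) * indicator (UNIV - {-pi<..<pi}) y = 0"
    by (subst (asm) nn_integral_0_iff_AE) auto
  then have "AE y in lborel. y \<notin> {-pi<..<pi} \<longrightarrow> f y = 0"
    by eventually_elim (auto simp: indicator_def f_nonneg)
  ultimately show "AE y in lborel. y \<notin> {-pi<..<pi} \<longrightarrow> f y = 0"
    and "emeasure \<sigma> (UNIV - {-pi<..<pi}) = 0" "emeasure \<delta> (UNIV - {-pi<..<pi}) = 0"
    by auto
qed

lemma \<mu>_concentrated: "emeasure \<mu> (UNIV - {-pi..pi}) = 0"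
proof -
  have "emeasure \<mu> (UNIV - {-pi..pi}) \<le> emeasure \<mu> (UNIV - {-pi<..<pi})"
    using sets_\<mu> by (intro emeasure_mono) auto
  then show ?thesis using supp_\<mu> by simp
qed

lemma ennreal_singular_mass: "ennreal singular_mass = emeasure \<sigma> {-pi<..<pi} + emeasure \<delta> {-pi<..<pi}"
proof -
  have "emeasure \<mu> {-pi<..<pi} < \<infinity>"
    using finite_measure.emeasure_finite[OF finite_\<mu>] by (simp add: less_top)
  moreover have "emeasure \<sigma> {-pi<..<pi} \<le> emeasure \<mu> {-pi<..<pi}" "emeasure \<delta> {-pi<..<pi} \<le> emeasure \<mu> {-pi<..<pi}"
    using decomp[of "{-pi<..<pi}"] by (auto simp: add_ac)
  ultimately have "emeasure \<sigma> {-pi<..<pi} < \<infinity>" "emeasure \<delta> {-pi<..<pi} < \<infinity>"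
    by (auto intro: le_less_trans)
  then show ?thesis by (simp add: emeasure_eq_ennreal_measure ennreal_plus)
qed

lemma nn_integral_decomp:
  assumes "g \<in> borel_measurable borel"
  shows "integral\<^sup>N \<mu> g = (\<integral>\<^sup>+ y. ennreal (f y) * g y \<partial>lborel) + integral\<^sup>N \<sigma> g + integral\<^sup>N \<delta> g"
proof -
  have "integral\<^sup>N \<mu> g = (\<Sum>i\<in>{0, 1, 2}. integral\<^sup>N ([density lborel (\<lambda>x. ennreal (f x)), \<sigma>, \<delta>] ! i) g)"
    using sets_\<mu> sets_\<sigma> sets_\<delta> assms by (intro nn_integral_sum_measures) (auto simp: decomp emeasure_density)
  then show ?thesis using assms by (simp add: nn_integral_density add_ac)
qed

lemma nn_integral_set_pot_le_sym_measure:
  assumes E: "E \<in> sets borel" "E \<subseteq> {-pi..pi}"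
  defines "t \<equiv> measure lborel E"
  shows "(\<integral>\<^sup>+ y. ennreal (set_pot E y) \<partial>\<mu>)
    \<le> (\<integral>\<^sup>+ y. ennreal (set_pot {-t/2..t/2} y) \<partial>sym_measure f singular_mass)"
proof -
  have I: "{-t/2..t/2} \<in> sets borel" "{-t/2..t/2} \<subseteq> {-pi..pi}"
    using measure_subset_Icc_le[OF E] by (auto simp: t_def)
  note [measurable] = set_pot_measurable[OF E] set_pot_measurable[OF I]
  have "(\<integral>\<^sup>+ y. ennreal (set_pot E y) \<partial>\<mu>) = (\<integral>\<^sup>+ y. ennreal (f y) * ennreal (set_pot E y) \<partial>lborel)
      + (\<integral>\<^sup>+ y. ennreal (set_pot E y) \<partial>\<sigma>) + (\<integral>\<^sup>+ y. ennreal (set_pot E y) \<partial>\<delta>)"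
    by (rule nn_integral_decomp) measurable
  also have "\<dots> \<le> (\<integral>\<^sup>+ y. ennreal (sym_density f y) * ennreal (set_pot {-t/2..t/2} y) \<partial>lborel)
      + ennreal (set_pot {-t/2..t/2} 0) * emeasure \<sigma> {-pi<..<pi}
      + ennreal (set_pot {-t/2..t/2} 0) * emeasure \<delta> {-pi<..<pi}"
    using nn_integral_density_set_pot_le[OF f_outside E] nn_integral_set_pot_le_mass[OF sets_\<sigma> \<sigma>_outside E]
      nn_integral_set_pot_le_mass[OF sets_\<delta> \<delta>_outside E]
    by (intro add_mono) (auto simp: t_def)
  also have "\<dots> = (\<integral>\<^sup>+ y. ennreal (set_pot {-t/2..t/2} y) \<partial>sym_measure f singular_mass)"
  proof -
    have "(\<lambda>y. ennreal (set_pot {-t/2..t/2} y)) \<in> borel_measurable borel" by measurable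
    then show ?thesis
      by (simp add: nn_integral_sym_measure ennreal_singular_mass distrib_right mult.commute)
  qed
  finally show ?thesis .
qed

lemma set_integral_u_pot_le_sym_measure:
  assumes E: "E \<in> sets borel" "E \<subseteq> {-pi..pi}"
  defines "t \<equiv> measure lborel E"
  shows "(LINT x:E|lborel. u_pot \<mu> x) \<le> (LINT x:{-t/2..t/2}|lborel. u_pot (sym_measure f singular_mass) x)"
proof -
  have I: "{-t/2..t/2} \<in> sets borel" "{-t/2..t/2} \<subseteq> {-pi..pi}"
    using measure_subset_Icc_le[OF E] by (auto simp: t_def)
  note sym = sets_sym_measure[of f singular_mass] finite_measure_sym_measure[of singular_mass]
    sym_measure_concentrated[of singular_mass]
  have "(\<integral>\<^sup>+ y. ennreal (set_pot {-t/2..t/2} y) \<partial>sym_measure f singular_mass) < top"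
    using order.strict_trans1[OF nn_integral_set_pot_le[OF sym I] ennreal_less_top] .
  then show ?thesis
    unfolding set_integral_u_pot[OF sets_\<mu> finite_\<mu> \<mu>_concentrated E] set_integral_u_pot[OF sym I]
    using nn_integral_set_pot_le_sym_measure[OF E] unfolding t_def by (rule enn2real_mono[rotated])
qed

end

theorem lemma5p8:
  fixes \<mu> \<sigma> \<delta> :: "real measure" and f :: "real \<Rightarrow> real" and t :: real
  assumes sets_mu: "sets \<mu> = sets borel"
      and finite_mu: "finite_measure \<mu>"
      and supp_mu: "emeasure \<mu> (UNIV - {-pi<..<pi}) = 0"
      and nonzero_mu: "emeasure \<mu> {-pi<..<pi} \<noteq> 0"
      and f_meas: "f \<in> borel_measurable borel"
      and f_nonneg: "\<And>x. f x \<ge> 0"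
      and f_int: "set_integrable lborel {-pi..pi} f"
      and sets_sigma: "sets \<sigma> = sets borel"
      and sigma_atomless: "\<And>x. emeasure \<sigma> {x} = 0"
      and sigma_sing: "\<exists>N \<in> sets borel. emeasure lborel N = 0 \<and> emeasure \<sigma> (UNIV - N) = 0"
      and sets_delta: "sets \<delta> = sets borel"
      and delta_atomic: "\<exists>C. countable C \<and> emeasure \<delta> (UNIV - C) = 0"
      and decomp: "\<And>A. A \<in> sets borel \<Longrightarrow>
          emeasure \<mu> A = (\<integral>\<^sup>+x. ennreal (f x) * indicator A x \<partial>lborel) + emeasure \<sigma> A + emeasure \<delta> A"
      and t: "t \<in> {0..2*pi}"
  shows "star_fun (u_pot \<mu>) t
         \<le> star_fun (u_pot (sym_measure f (measure \<sigma> {-pi<..<pi} + measure \<delta> {-pi<..<pi}))) t"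
proof -
  interpret lebesgue_decomposition f \<mu> \<sigma> \<delta>
    by (intro lebesgue_decomposition.intro symmetrization.intro lebesgue_decomposition_axioms.intro;
        fact f_meas f_nonneg f_int sets_mu sets_sigma sets_delta finite_mu supp_mu decomp)
  show ?thesis
  proof (rule star_fun_le_centered[OF t])
    fix E :: "real set" assume "E \<in> sets borel" "E \<subseteq> {-pi..pi}"
    then show "(LINT x:E|lborel. u_pot \<mu> x)
        \<le> (LINT x:{-measure lborel E/2..measure lborel E/2}|lborel. u_pot (sym_measure f singular_mass) x)"
      using set_integral_u_pot_le_sym_measure by simp
  next
    fix E :: "real set" assume "E \<in> sets borel" "E \<subseteq> {-pi..pi}"
    then show "(LINT x:E|lborel. u_pot (sym_measure f singular_mass) x)
        \<le> pi^2 * measure (sym_measure f singular_mass) UNIV"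
      by (intro set_integral_u_pot_le sets_sym_measure finite_measure_sym_measure sym_measure_concentrated)
  qed
qed

end
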